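(* Let $W$ be a group admitting an odd connected Coxeter system $(W,S)$ of rank $n\geq 3$ whose graph $\mathcal V_{(W,S)}$ is a tree, and let $m_1,\dots,m_{n-1}$ be the (multiset of) finite exponents of this system. Then there is an injective homomorphism $$W\hookrightarrow \operatorname{Aut}\big((\mathbb Z/m_1\mathbb Z)\ast(\mathbb Z/m_2\mathbb Z)\ast\cdots\ast(\mathbb Z/m_{n-1}\mathbb Z)\big).$$
   Context: A Coxeter system $(W,S)$ with $S=\{w_1,\dots,w_n\}$ means that $W$ has the presentation $\langle w_1,\dots,w_n \mid (w_iw_j)^{m_{ij}}=1\rangle$, where $m_{ii}=1$ and $m_{ij}=m_{ji}\in\{2,3,4,\dots\}\cup\{\infty\}$ for $i\neq j$ (no relation is imposed when $m_{ij}=\infty$). The numbers $m_{ij}$, $i\neq j$, are the exponents and $n$ is the rank. The system is odd if every exponent is odd or $\infty$. The graph $\mathcal V_{(W,S)}$ has vertex set $\{1,\dots,n\}$ and an edge between $i\neq j$ iff $m_{ij}<\infty$; the system is connected if $\mathcal V_{(W,S)}$ is connected. When $\mathcal V_{(W,S)}$ is a tree there are exactly $n-1$ finite exponents (one per edge). $\ast$ denotes free product. *)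

theory Defs
  imports "HOL-Algebra.Algebra" "HOL-Library.Extended_Nat" "HOL-Library.Multiset"
begin

text \<open>Words over the generators I: letters (i, True) stand for x_i, (i, False) for x_i inverse.\<close>
definition pres_words :: "'a set \<Rightarrow> ('a \<times> bool) list set" where
  "pres_words I = {w. fst ` set w \<subseteq> I}"

definition pres_step :: "'a set \<Rightarrow> ('a \<times> bool) list set \<Rightarrow> (('a \<times> bool) list \<times> ('a \<times> bool) list) set" where
  "pres_step I R = {(u @ v, u @ r @ v) | u v r. u \<in> pres_words I \<and> v \<in> pres_words I \<and>
      r \<in> R \<union> {[(i, b), (i, \<not> b)] | i b. i \<in> I}}"

definition pres_rel :: "'a set \<Rightarrow> ('a \<times> bool) list set \<Rightarrow> (('a \<times> bool) list \<times> ('a \<times> bool) list) set" where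
  "pres_rel I R = ((pres_step I R \<union> (pres_step I R)\<inverse>)\<^sup>*) \<inter> (pres_words I \<times> pres_words I)"

definition presented_group :: "'a set \<Rightarrow> ('a \<times> bool) list set \<Rightarrow> ('a \<times> bool) list set monoid" where
  "presented_group I R =
    \<lparr> carrier = pres_words I // pres_rel I R,
      monoid.mult = (\<lambda>A B. pres_rel I R `` {x @ y | x y. x \<in> A \<and> y \<in> B}),
      one = pres_rel I R `` {[]} \<rparr>"

text \<open>Exponents m i j for generators w_0..w_(n-1); \<infinity> means no relation.\<close>
definition coxeter_matrix :: "nat \<Rightarrow> (nat \<Rightarrow> nat \<Rightarrow> enat) \<Rightarrow> bool" where
  "coxeter_matrix n m \<longleftrightarrow> (\<forall>i<n. m i i = 1) \<and> (\<forall>i<n. \<forall>j<n. m i j = m j i)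
     \<and> (\<forall>i<n. \<forall>j<n. i \<noteq> j \<longrightarrow> m i j \<ge> 2)"

text \<open>Relators (w_i w_j)^(m i j) for all finite m i j (for i = j this is w_i^2).\<close>
definition coxeter_relators :: "nat \<Rightarrow> (nat \<Rightarrow> nat \<Rightarrow> enat) \<Rightarrow> (nat \<times> bool) list set" where
  "coxeter_relators n m = {concat (replicate k [(i, True), (j, True)]) | i j k. i < n \<and> j < n \<and> m i j = enat k}"

definition coxeter_group :: "nat \<Rightarrow> (nat \<Rightarrow> nat \<Rightarrow> enat) \<Rightarrow> (nat \<times> bool) list set monoid" where
  "coxeter_group n m = presented_group {..<n} (coxeter_relators n m)"

definition odd_coxeter :: "nat \<Rightarrow> (nat \<Rightarrow> nat \<Rightarrow> enat) \<Rightarrow> bool" where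
  "odd_coxeter n m \<longleftrightarrow> (\<forall>i<n. \<forall>j<n. i \<noteq> j \<longrightarrow> m i j = \<infinity> \<or> (\<exists>k. m i j = enat k \<and> odd k))"

definition cox_adj :: "nat \<Rightarrow> (nat \<Rightarrow> nat \<Rightarrow> enat) \<Rightarrow> nat \<Rightarrow> nat \<Rightarrow> bool" where
  "cox_adj n m i j \<longleftrightarrow> i < n \<and> j < n \<and> i \<noteq> j \<and> m i j \<noteq> \<infinity>"

definition cox_connected :: "nat \<Rightarrow> (nat \<Rightarrow> nat \<Rightarrow> enat) \<Rightarrow> bool" where
  "cox_connected n m \<longleftrightarrow> (\<forall>i<n. \<forall>j<n. (i, j) \<in> {(a, b). cox_adj n m a b}\<^sup>*)"

definition cox_has_cycle :: "nat \<Rightarrow> (nat \<Rightarrow> nat \<Rightarrow> enat) \<Rightarrow> bool" where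
  "cox_has_cycle n m \<longleftrightarrow> (\<exists>vs. length vs \<ge> 3 \<and> distinct vs \<and>
      (\<forall>k. Suc k < length vs \<longrightarrow> cox_adj n m (vs ! k) (vs ! Suc k)) \<and>
      cox_adj n m (last vs) (hd vs))"

definition cox_tree :: "nat \<Rightarrow> (nat \<Rightarrow> nat \<Rightarrow> enat) \<Rightarrow> bool" where
  "cox_tree n m \<longleftrightarrow> cox_connected n m \<and> \<not> cox_has_cycle n m"

definition finite_exponents :: "nat \<Rightarrow> (nat \<Rightarrow> nat \<Rightarrow> enat) \<Rightarrow> nat multiset" where
  "finite_exponents n m = image_mset (\<lambda>(i, j). the_enat (m i j))
     (mset_set {(i, j). i < j \<and> j < n \<and> m i j \<noteq> \<infinity>})"

definition free_product_cyclic :: "nat list \<Rightarrow> (nat \<times> bool) list set monoid" where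
  "free_product_cyclic ms = presented_group {..<length ms}
     {replicate (ms ! l) (l, True) | l. l < length ms}"

end

theory Submission
  imports Defs
begin

(*
  Root the tree at the vertex 0 and label its n - 1 edges by the cyclic factors Z/m_l of
  F = Z/m_1 * ... * Z/m_(n-1), with generators x_l.  Let T be the automorphism of F inverting
  every x_l and, for a vertex v, let a_v be the product of the elements x_l^e_l, with
  m_l = 2 e_l + 1, over the edges of the path from the root to v.  The generator s_v is sent to
  the involution a_v T a_v^-1.  For an edge l from p to v this gives
  (a_p T a_p^-1)(a_v T a_v^-1) = conj (a_p x_l a_p^-1), because x_l^-2e_l = x_l; hence the
  Coxeter relations hold and we get a homomorphism Phi : W -> Aut F.

  For injectivity, a homomorphism psi : F -> W sending x_l to a conjugate of s_p s_v satisfies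
  Phi o psi = conj.  Since all reflections along the tree are conjugate to s_0 (the products
  s_p s_v have odd order), every element of W is psi u or psi u s_0.  Now conj u is trivial only
  for u = 1, as F is centreless, and (conj u) T never is: a normal form argument shows that no
  element can twist every generator into its inverse when there are at least two factors.
*)

context group
begin

lemma cancel_simps[simp]:
  "a \<in> carrier G \<Longrightarrow> z \<in> carrier G \<Longrightarrow> inv a \<otimes> (a \<otimes> z) = z"
  "a \<in> carrier G \<Longrightarrow> z \<in> carrier G \<Longrightarrow> a \<otimes> (inv a \<otimes> z) = z"
  by (simp_all add: m_assoc[symmetric])

lemma invol_inv: "s \<in> carrier G \<Longrightarrow> s \<otimes> s = \<one> \<Longrightarrow> inv s = s"
  by (rule inv_equality) auto

lemma invol_cancel: "s \<in> carrier G \<Longrightarrow> s \<otimes> s = \<one> \<Longrightarrow> z \<in> carrier G \<Longrightarrow> s \<otimes> (s \<otimes> z) = z"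
  by (simp add: m_assoc[symmetric])

lemma conj_pow: "x \<in> carrier G \<Longrightarrow> s \<in> carrier G \<Longrightarrow> (x \<otimes> s \<otimes> inv x) [^] (k::nat) = x \<otimes> s [^] k \<otimes> inv x"
  by (induction k) (simp_all add: m_assoc)

lemma conj_involution:
  assumes "x \<in> carrier G" "t \<in> carrier G" "t \<otimes> t = \<one>"
  shows "(x \<otimes> t \<otimes> inv x) \<otimes> (x \<otimes> t \<otimes> inv x) = \<one>"
  using assms invol_cancel[OF assms(2,3)] by (simp add: m_assoc)

lemma conj_mult_conj:
  assumes "x \<in> carrier G" "y \<in> carrier G" "t \<in> carrier G"
  shows "(x \<otimes> t \<otimes> inv x) \<otimes> ((x \<otimes> y) \<otimes> t \<otimes> inv (x \<otimes> y)) = x \<otimes> ((t \<otimes> y \<otimes> t) \<otimes> inv y) \<otimes> inv x"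
  using assms by (simp add: m_assoc inv_mult_group)

lemma involution_mult_conj:
  assumes c: "s \<in> carrier G" "t \<in> carrier G" and i: "s \<otimes> s = \<one>" "t \<otimes> t = \<one>"
  shows "s \<otimes> (s \<otimes> t) \<otimes> s = inv (s \<otimes> t)"
  using c invol_inv[OF c(1) i(1)] invol_inv[OF c(2) i(2)] invol_cancel[OF c(1) i(1)]
  by (simp add: m_assoc inv_mult_group)

lemma odd_dihedral_conj:
  assumes c: "s \<in> carrier G" "t \<in> carrier G" and i: "s \<otimes> s = \<one>" "t \<otimes> t = \<one>"
    and zp: "(s \<otimes> t) [^] Suc (2 * e) = \<one>"
  shows "(s \<otimes> t) [^] (e::nat) \<otimes> s \<otimes> inv ((s \<otimes> t) [^] e) = t"
proof -
  define z where "z = s \<otimes> t"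
  have zc: "z \<in> carrier G" and ze: "z [^] e \<in> carrier G" using c by (simp_all add: z_def)
  have "s \<otimes> z [^] e \<otimes> s = (s \<otimes> z \<otimes> s) [^] e"
    using conj_pow[OF c(1) zc, of e] invol_inv[OF c(1) i(1)] by simp
  also have "\<dots> = inv (z [^] e)"
    using involution_mult_conj[OF c i] zc by (simp add: z_def nat_pow_inv)
  finally have h: "s \<otimes> z [^] e \<otimes> s = inv (z [^] e)" .
  have "z [^] e \<otimes> s \<otimes> inv (z [^] e) = z [^] e \<otimes> (s \<otimes> (s \<otimes> z [^] e \<otimes> s))"
    unfolding h using c ze by (simp add: m_assoc)
  also have "\<dots> = z [^] (e + e) \<otimes> s"
    using invol_cancel[OF c(1) i(1)] c ze zc by (simp add: m_assoc[symmetric] nat_pow_mult)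
  also have "z [^] (e + e) = inv z"
  proof (rule inv_equality[symmetric])
    show "z [^] (e + e) \<otimes> z = \<one>" using zp zc by (simp add: z_def mult_2)
  qed (use zc in simp_all)
  also have "inv z \<otimes> s = t"
    using c i invol_inv[OF c(1) i(1)] invol_inv[OF c(2) i(2)] by (simp add: z_def inv_mult_group m_assoc)
  finally show ?thesis by (simp add: z_def)
qed

end

lemma AutoGroup_mult: "f \<in> auto G \<Longrightarrow> g \<in> auto G \<Longrightarrow> f \<otimes>\<^bsub>AutoGroup G\<^esub> g = compose (carrier G) f g"
  by (simp add: AutoGroup_def BijGroup_def auto_def)

lemma AutoGroup_one: "\<one>\<^bsub>AutoGroup G\<^esub> = (\<lambda>x\<in>carrier G. x)"
  by (simp add: AutoGroup_def BijGroup_def)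

lemma AutoGroup_carrier: "carrier (AutoGroup G) = auto G"
  by (simp add: AutoGroup_def)

lemma auto_ext: "f \<in> auto G \<Longrightarrow> g \<in> auto G \<Longrightarrow> (\<And>x. x \<in> carrier G \<Longrightarrow> f x = g x) \<Longrightarrow> f = g"
  by (auto simp: auto_def Bij_def intro: extensionalityI)

lemma iso_embedding_transfer:
  assumes "G \<cong> H" and "\<exists>\<phi>. \<phi> \<in> hom H K \<and> inj_on \<phi> (carrier H)"
  shows "\<exists>\<phi>. \<phi> \<in> hom G K \<and> inj_on \<phi> (carrier G)"
proof -
  obtain h where h: "h \<in> hom G H" "bij_betw h (carrier G) (carrier H)"
    using assms(1) by (auto simp: is_iso_def iso_def)
  obtain \<phi> where \<phi>: "\<phi> \<in> hom H K" "inj_on \<phi> (carrier H)" using assms(2) by blast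
  have "\<phi> \<circ> h \<in> hom G K" by (rule hom_compose[OF h(1) \<phi>(1)])
  moreover have "inj_on (\<phi> \<circ> h) (carrier G)"
    using h(2) \<phi>(2) by (auto simp: bij_betw_def intro: comp_inj_on)
  ultimately show ?thesis by blast
qed

definition conj_aut :: "('a, 'b) monoid_scheme \<Rightarrow> 'a \<Rightarrow> 'a \<Rightarrow> 'a" where
  "conj_aut G g = (\<lambda>x\<in>carrier G. g \<otimes>\<^bsub>G\<^esub> x \<otimes>\<^bsub>G\<^esub> inv\<^bsub>G\<^esub> g)"

context group
begin

interpretation Aut: group "AutoGroup G" by (rule AutoGroup)

lemma AutoGroup_apply:
  "f \<in> auto G \<Longrightarrow> g \<in> auto G \<Longrightarrow> x \<in> carrier G \<Longrightarrow> (f \<otimes>\<^bsub>AutoGroup G\<^esub> g) x = f (g x)"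
  by (simp add: AutoGroup_mult compose_def)

lemma AutoGroup_one_apply: "x \<in> carrier G \<Longrightarrow> \<one>\<^bsub>AutoGroup G\<^esub> x = x"
  by (simp add: AutoGroup_one)

lemma auto_mult_closed: "f \<in> auto G \<Longrightarrow> g \<in> auto G \<Longrightarrow> f \<otimes>\<^bsub>AutoGroup G\<^esub> g \<in> auto G"
  using Aut.m_closed by (simp add: AutoGroup_carrier)

lemma one_auto: "\<one>\<^bsub>AutoGroup G\<^esub> \<in> auto G"
  using Aut.one_closed by (simp add: AutoGroup_carrier)

lemma conj_aut_apply: "x \<in> carrier G \<Longrightarrow> conj_aut G g x = g \<otimes> x \<otimes> inv g"
  by (simp add: conj_aut_def)

lemma conj_aut_auto: "g \<in> carrier G \<Longrightarrow> conj_aut G g \<in> auto G"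
proof -
  assume g: "g \<in> carrier G"
  have hom: "conj_aut G g \<in> hom G G"
    by (rule homI) (auto simp: conj_aut_apply g m_assoc)
  have "bij_betw (conj_aut G g) (carrier G) (carrier G)"
    by (rule bij_betwI[where g="conj_aut G (inv g)"]) (use g in \<open>auto simp: conj_aut_apply m_assoc\<close>)
  then show ?thesis using hom by (simp add: auto_def Bij_def conj_aut_def)
qed

lemma conj_aut_carrier: "g \<in> carrier G \<Longrightarrow> conj_aut G g \<in> carrier (AutoGroup G)"
  by (simp add: AutoGroup_carrier conj_aut_auto)

lemma conj_aut_mult:
  "g \<in> carrier G \<Longrightarrow> h \<in> carrier G \<Longrightarrow> conj_aut G (g \<otimes> h) = conj_aut G g \<otimes>\<^bsub>AutoGroup G\<^esub> conj_aut G h"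
  by (rule auto_ext[where G=G])
    (simp_all add: conj_aut_auto auto_mult_closed AutoGroup_apply conj_aut_apply m_assoc inv_mult_group)

lemma conj_aut_one: "conj_aut G \<one> = \<one>\<^bsub>AutoGroup G\<^esub>"
  by (rule auto_ext[where G=G]) (simp_all add: conj_aut_auto one_auto AutoGroup_one_apply conj_aut_apply)

lemma conj_aut_hom: "conj_aut G \<in> hom G (AutoGroup G)"
  by (rule homI) (auto simp: conj_aut_mult conj_aut_carrier)

lemma conj_aut_inv: "g \<in> carrier G \<Longrightarrow> conj_aut G (inv g) = inv\<^bsub>AutoGroup G\<^esub> conj_aut G g"
  using group_hom.hom_inv[OF group_hom.intro[OF is_group Aut.is_group group_hom_axioms.intro[OF conj_aut_hom]]] .

lemma conj_aut_pow: "g \<in> carrier G \<Longrightarrow> conj_aut G (g [^] (k::nat)) = conj_aut G g [^]\<^bsub>AutoGroup G\<^esub> k"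
  using group_hom.hom_nat_pow[OF group_hom.intro[OF is_group Aut.is_group group_hom_axioms.intro[OF conj_aut_hom]]] .

end

section \<open>Groups given by generators and relations\<close>

locale presentation =
  fixes I :: "'a set" and R :: "('a \<times> bool) list set"
  assumes R_words: "R \<subseteq> pres_words I"
begin

abbreviation "Words \<equiv> pres_words I"
abbreviation "Step \<equiv> pres_step I R"
abbreviation "rel \<equiv> pres_rel I R"
abbreviation "G \<equiv> presented_group I R"

lemma words_append[simp]: "a @ b \<in> Words \<longleftrightarrow> a \<in> Words \<and> b \<in> Words"
  by (auto simp: pres_words_def)

lemma words_Cons[simp]: "c # b \<in> Words \<longleftrightarrow> fst c \<in> I \<and> b \<in> Words"
  by (auto simp: pres_words_def)

lemma words_Nil[simp]: "[] \<in> Words"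
  by (auto simp: pres_words_def)

lemma step_words: "(a, b) \<in> Step \<Longrightarrow> a \<in> Words \<and> b \<in> Words"
  using R_words by (auto simp: pres_step_def)

lemma rel_words: "(a, b) \<in> rel \<Longrightarrow> a \<in> Words \<and> b \<in> Words"
  by (auto simp: pres_rel_def)

lemma rel_refl: "a \<in> Words \<Longrightarrow> (a, a) \<in> rel"
  by (auto simp: pres_rel_def)

lemma rel_sym: "(a, b) \<in> rel \<Longrightarrow> (b, a) \<in> rel"
proof -
  assume "(a, b) \<in> rel"
  then have "(a, b) \<in> (Step \<union> Step\<inverse>)\<^sup>*" "a \<in> Words" "b \<in> Words" by (auto simp: pres_rel_def)
  then have "(b, a) \<in> ((Step \<union> Step\<inverse>)\<inverse>)\<^sup>*" by (simp add: rtrancl_converse)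
  moreover have "(Step \<union> Step\<inverse>)\<inverse> = Step \<union> Step\<inverse>" by auto
  ultimately show ?thesis using \<open>a \<in> Words\<close> \<open>b \<in> Words\<close> by (auto simp: pres_rel_def)
qed

lemma rel_trans: "(a, b) \<in> rel \<Longrightarrow> (b, c) \<in> rel \<Longrightarrow> (a, c) \<in> rel"
  by (auto simp: pres_rel_def)

lemma equiv_rel: "equiv Words rel"
proof (rule equivI)
  show "refl_on Words rel" unfolding refl_on_def using rel_refl rel_words by auto
  show "sym rel" unfolding sym_def using rel_sym by blast
  show "trans rel" unfolding trans_def using rel_trans by blast
qed (use rel_words in auto)

lemma step_context: "(a, b) \<in> Step \<Longrightarrow> x \<in> Words \<Longrightarrow> y \<in> Words \<Longrightarrow> (x @ a @ y, x @ b @ y) \<in> Step"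
proof -
  assume "(a, b) \<in> Step" "x \<in> Words" "y \<in> Words"
  then obtain u v r where "a = u @ v" "b = u @ r @ v" "u \<in> Words" "v \<in> Words"
    "r \<in> R \<union> {[(i, b), (i, \<not> b)] | i b. i \<in> I}"
    unfolding pres_step_def by blast
  then show ?thesis using \<open>x \<in> Words\<close> \<open>y \<in> Words\<close>
    unfolding pres_step_def by (intro CollectI exI[of _ "x @ u"] exI[of _ "v @ y"] exI[of _ r]) auto
qed

lemma rel_context: "(a, b) \<in> rel \<Longrightarrow> x \<in> Words \<Longrightarrow> y \<in> Words \<Longrightarrow> (x @ a @ y, x @ b @ y) \<in> rel"
proof -
  assume h: "(a, b) \<in> rel" and x: "x \<in> Words" and y: "y \<in> Words"
  from h have st: "(a, b) \<in> (Step \<union> Step\<inverse>)\<^sup>*" and aw: "a \<in> Words" and bw: "b \<in> Words" by (auto simp: pres_rel_def)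
  have "(x @ a @ y, x @ b @ y) \<in> (Step \<union> Step\<inverse>)\<^sup>*"
    using st
  proof (induction rule: rtrancl_induct)
    case base then show ?case by simp
  next
    case (step b c)
    have "(b, c) \<in> Step \<or> (c, b) \<in> Step" using step(2) by auto
    then have "(x @ b @ y, x @ c @ y) \<in> Step \<union> Step\<inverse>" using step_context x y by blast
    then show ?case using step.IH by (rule rtrancl_into_rtrancl[rotated])
  qed
  then show ?thesis using x y aw bw by (auto simp: pres_rel_def)
qed

lemma rel_append: "(a, b) \<in> rel \<Longrightarrow> (c, d) \<in> rel \<Longrightarrow> (a @ c, b @ d) \<in> rel"
proof -
  assume 1: "(a, b) \<in> rel" and 2: "(c, d) \<in> rel"
  have "(a @ c, b @ c) \<in> rel" using rel_context[OF 1, of "[]" c] 2 rel_words by auto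
  moreover have "(b @ c, b @ d) \<in> rel" using rel_context[OF 2, of b "[]"] 1 rel_words by auto
  ultimately show ?thesis by (rule rel_trans)
qed

lemma step_cancel: "u \<in> Words \<Longrightarrow> v \<in> Words \<Longrightarrow> i \<in> I \<Longrightarrow> (u @ v, u @ [(i, b), (i, \<not> b)] @ v) \<in> Step"
  unfolding pres_step_def by blast

lemma step_relator: "u \<in> Words \<Longrightarrow> v \<in> Words \<Longrightarrow> r \<in> R \<Longrightarrow> (u @ v, u @ r @ v) \<in> Step"
  unfolding pres_step_def by blast

lemma rel_relator: "r \<in> R \<Longrightarrow> (r, []) \<in> rel"
proof -
  assume r: "r \<in> R"
  have "([] @ [], [] @ r @ []) \<in> Step" by (rule step_relator[OF _ _ r]) auto
  then have "([], r) \<in> rel" using step_words by (auto simp: pres_rel_def)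
  then show ?thesis by (rule rel_sym)
qed

lemma rel_cancel: "i \<in> I \<Longrightarrow> ([(i, b), (i, \<not> b)], []) \<in> rel"
proof -
  assume i: "i \<in> I"
  have "([] @ [], [] @ [(i, b), (i, \<not> b)] @ []) \<in> Step" by (rule step_cancel[OF _ _ i]) auto
  then have "([], [(i, b), (i, \<not> b)]) \<in> rel" using step_words i by (auto simp: pres_rel_def)
  then show ?thesis by (rule rel_sym)
qed

definition cls :: "('a \<times> bool) list \<Rightarrow> ('a \<times> bool) list set" where
  "cls w = rel `` {w}"

lemma cls_eq_iff: "a \<in> Words \<Longrightarrow> b \<in> Words \<Longrightarrow> cls a = cls b \<longleftrightarrow> (a, b) \<in> rel"
  unfolding cls_def using equiv_class_eq_iff[OF equiv_rel] by auto

lemma cls_eqI: "(a, b) \<in> rel \<Longrightarrow> cls a = cls b"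
  using cls_eq_iff rel_words by blast

lemma carrier_G: "carrier G = Words // rel"
  by (simp add: presented_group_def)

lemma cls_in_carrier: "a \<in> Words \<Longrightarrow> cls a \<in> carrier G"
  unfolding carrier_G cls_def by (rule quotientI)

lemma carrier_cls: "A \<in> carrier G \<Longrightarrow> (\<And>a. a \<in> Words \<Longrightarrow> A = cls a \<Longrightarrow> P) \<Longrightarrow> P"
  unfolding carrier_G cls_def by (erule quotientE) blast

lemma mem_cls: "a \<in> Words \<Longrightarrow> a \<in> cls a"
  unfolding cls_def using rel_refl by auto

lemma cls_mult: "a \<in> Words \<Longrightarrow> b \<in> Words \<Longrightarrow> cls a \<otimes>\<^bsub>G\<^esub> cls b = cls (a @ b)"
proof -
  assume a: "a \<in> Words" and b: "b \<in> Words"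
  have eq: "{x @ y | x y. x \<in> cls a \<and> y \<in> cls b} \<subseteq> cls (a @ b)"
    unfolding cls_def using rel_append by blast
  have "cls a \<otimes>\<^bsub>G\<^esub> cls b = rel `` {x @ y | x y. x \<in> cls a \<and> y \<in> cls b}"
    by (simp add: presented_group_def)
  also have "\<dots> = cls (a @ b)"
  proof
    show "rel `` {x @ y | x y. x \<in> cls a \<and> y \<in> cls b} \<subseteq> cls (a @ b)"
      using eq unfolding cls_def using rel_trans by blast
    show "cls (a @ b) \<subseteq> rel `` {x @ y | x y. x \<in> cls a \<and> y \<in> cls b}"
      using mem_cls[OF a] mem_cls[OF b] unfolding cls_def by blast
  qed
  finally show ?thesis .
qed

lemma one_G: "\<one>\<^bsub>G\<^esub> = cls []"
  by (simp add: presented_group_def cls_def)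

definition word_inv :: "('a \<times> bool) list \<Rightarrow> ('a \<times> bool) list" where
  "word_inv w = rev (map (\<lambda>(i, b). (i, \<not> b)) w)"

lemma word_inv_words: "w \<in> Words \<Longrightarrow> word_inv w \<in> Words"
  by (auto simp: word_inv_def pres_words_def)

lemma word_inv_Cons: "word_inv ((i, b) # w) = word_inv w @ [(i, \<not> b)]"
  by (simp add: word_inv_def)

lemma rel_word_inv_cancel: "w \<in> Words \<Longrightarrow> (word_inv w @ w, []) \<in> rel"
proof (induction w)
  case Nil then show ?case by (simp add: word_inv_def rel_refl)
next
  case (Cons c w)
  obtain i b where c: "c = (i, b)" by (cases c)
  have i: "i \<in> I" and w: "w \<in> Words" using Cons.prems c by auto
  have "(word_inv w @ [(i, \<not> b), (i, \<not> \<not> b)] @ w, word_inv w @ [] @ w) \<in> rel"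
    by (rule rel_context[OF rel_cancel[OF i] word_inv_words[OF w] w])
  then have "(word_inv (c # w) @ c # w, word_inv w @ w) \<in> rel" by (simp add: c word_inv_Cons)
  then show ?case using Cons.IH[OF w] rel_trans by blast
qed

lemma group_presented: "group G"
proof (rule groupI)
  fix x y assume "x \<in> carrier G" "y \<in> carrier G"
  then show "x \<otimes>\<^bsub>G\<^esub> y \<in> carrier G"
    by (auto elim!: carrier_cls simp: cls_mult cls_in_carrier)
next
  show "\<one>\<^bsub>G\<^esub> \<in> carrier G" by (simp add: one_G cls_in_carrier)
next
  fix x y z assume "x \<in> carrier G" "y \<in> carrier G" "z \<in> carrier G"
  then show "x \<otimes>\<^bsub>G\<^esub> y \<otimes>\<^bsub>G\<^esub> z = x \<otimes>\<^bsub>G\<^esub> (y \<otimes>\<^bsub>G\<^esub> z)"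
    by (auto elim!: carrier_cls simp: cls_mult)
next
  fix x assume "x \<in> carrier G"
  then show "\<one>\<^bsub>G\<^esub> \<otimes>\<^bsub>G\<^esub> x = x"
    by (auto elim!: carrier_cls simp: cls_mult one_G)
next
  fix x assume "x \<in> carrier G"
  then obtain a where a: "a \<in> Words" "x = cls a" by (rule carrier_cls)
  have "cls (word_inv a) \<in> carrier G" using word_inv_words[OF a(1)] by (rule cls_in_carrier)
  moreover have "cls (word_inv a) \<otimes>\<^bsub>G\<^esub> x = \<one>\<^bsub>G\<^esub>"
    using a word_inv_words[OF a(1)] by (simp add: cls_mult one_G cls_eqI[OF rel_word_inv_cancel[OF a(1)]])
  ultimately show "\<exists>y\<in>carrier G. y \<otimes>\<^bsub>G\<^esub> x = \<one>\<^bsub>G\<^esub>" by blast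
qed

definition gen :: "'a \<Rightarrow> ('a \<times> bool) list set" where
  "gen i = cls [(i, True)]"

lemma gen_carrier: "i \<in> I \<Longrightarrow> gen i \<in> carrier G"
  unfolding gen_def by (rule cls_in_carrier) simp

lemma cls_Cons_True: "i \<in> I \<Longrightarrow> w \<in> Words \<Longrightarrow> cls ((i, True) # w) = gen i \<otimes>\<^bsub>G\<^esub> cls w"
  unfolding gen_def by (subst cls_mult) auto

lemma cls_False: "i \<in> I \<Longrightarrow> cls [(i, False)] = inv\<^bsub>G\<^esub> gen i"
proof -
  assume i: "i \<in> I"
  interpret group G by (rule group_presented)
  have "cls [(i, False)] \<otimes>\<^bsub>G\<^esub> gen i = \<one>\<^bsub>G\<^esub>"
    unfolding gen_def one_G using i by (simp add: cls_mult cls_eqI[OF rel_cancel[OF i, of False, simplified]])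
  moreover have "cls [(i, False)] \<in> carrier G" using i by (intro cls_in_carrier) simp
  ultimately show ?thesis using i gen_carrier by (simp add: inv_equality)
qed

lemma cls_Cons_False: "i \<in> I \<Longrightarrow> w \<in> Words \<Longrightarrow> cls ((i, False) # w) = inv\<^bsub>G\<^esub> gen i \<otimes>\<^bsub>G\<^esub> cls w"
  using cls_mult[of "[(i, False)]" w] cls_False by auto

lemma hom_eq_on_gens:
  assumes "group H" "h1 \<in> hom G H" "h2 \<in> hom G H" "\<And>i. i \<in> I \<Longrightarrow> h1 (gen i) = h2 (gen i)"
    and "x \<in> carrier G"
  shows "h1 x = h2 x"
proof -
  interpret G: group G by (rule group_presented)
  interpret H: group H by fact
  interpret h1: group_hom G H h1 by unfold_locales fact
  interpret h2: group_hom G H h2 by unfold_locales fact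
  have "h1 (cls w) = h2 (cls w)" if "w \<in> Words" for w
    using that
  proof (induction w)
    case Nil then show ?case by (simp flip: one_G)
  next
    case (Cons c w)
    obtain i b where c: "c = (i, b)" by (cases c)
    have i: "i \<in> I" and w: "w \<in> Words" using Cons.prems c by auto
    show ?case
    proof (cases b)
      case True
      then show ?thesis using c i w Cons.IH[OF w] assms(4)[OF i]
        by (simp add: cls_Cons_True gen_carrier cls_in_carrier)
    next
      case False
      then show ?thesis using c i w Cons.IH[OF w] assms(4)[OF i]
        by (simp add: cls_Cons_False gen_carrier cls_in_carrier)
    qed
  qed
  then show ?thesis using assms(5) by (auto elim: carrier_cls)
qed

definition eval_word :: "('b, 'c) monoid_scheme \<Rightarrow> ('a \<Rightarrow> 'b) \<Rightarrow> ('a \<times> bool) list \<Rightarrow> 'b" where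
  "eval_word H f w = foldr (\<lambda>(i, b) acc. (if b then f i else inv\<^bsub>H\<^esub> f i) \<otimes>\<^bsub>H\<^esub> acc) w \<one>\<^bsub>H\<^esub>"

lemma eval_word_simps[simp]:
  "eval_word H f [] = \<one>\<^bsub>H\<^esub>"
  "eval_word H f ((i, b) # w) = (if b then f i else inv\<^bsub>H\<^esub> f i) \<otimes>\<^bsub>H\<^esub> eval_word H f w"
  by (simp_all add: eval_word_def)

definition lift :: "('b, 'c) monoid_scheme \<Rightarrow> ('a \<Rightarrow> 'b) \<Rightarrow> ('a \<times> bool) list set \<Rightarrow> 'b" where
  "lift H f A = eval_word H f (SOME w. w \<in> A)"

context
  fixes H (structure) and f
  assumes H: "group H" and f: "f \<in> I \<rightarrow> carrier H"
begin

interpretation H: group H by (rule H)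

lemma eval_word_carrier: "w \<in> Words \<Longrightarrow> eval_word H f w \<in> carrier H"
  by (induction w) (auto intro!: H.m_closed funcset_mem[OF f])

lemma eval_word_append: "a \<in> Words \<Longrightarrow> eval_word H f (a @ b) = eval_word H f a \<otimes> eval_word H f b" if "b \<in> Words"
proof (induction a)
  case Nil then show ?case using eval_word_carrier[OF that] by simp
next
  case (Cons c a)
  obtain i b where c: "c = (i, b)" by (cases c)
  then show ?case using Cons eval_word_carrier[OF that] eval_word_carrier funcset_mem[OF f]
    by (auto simp: H.m_assoc)
qed

context
  assumes fR: "\<And>r. r \<in> R \<Longrightarrow> eval_word H f r = \<one>"
begin

lemma eval_word_step: "(a, b) \<in> Step \<Longrightarrow> eval_word H f a = eval_word H f b"
proof -
  assume "(a, b) \<in> Step"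
  then obtain u v r where ab: "a = u @ v" "b = u @ r @ v" "u \<in> Words" "v \<in> Words"
    and r: "r \<in> R \<union> {[(i, b), (i, \<not> b)] | i b. i \<in> I}"
    unfolding pres_step_def by blast
  have rw: "r \<in> Words" using r R_words by auto
  have "eval_word H f r = \<one>"
    using r fR f by (auto simp: Pi_iff)
  then show ?thesis using ab rw eval_word_append eval_word_carrier by simp
qed

lemma eval_word_rel: "(a, b) \<in> rel \<Longrightarrow> eval_word H f a = eval_word H f b"
proof -
  assume "(a, b) \<in> rel"
  then have "(a, b) \<in> (Step \<union> Step\<inverse>)\<^sup>*" by (simp add: pres_rel_def)
  then show ?thesis
    by (induction rule: rtrancl_induct) (auto dest: eval_word_step)
qed

lemma lift_cls: "w \<in> Words \<Longrightarrow> lift H f (cls w) = eval_word H f w"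
proof -
  assume w: "w \<in> Words"
  have "(SOME x. x \<in> cls w) \<in> cls w" using mem_cls[OF w] by (rule someI)
  then have "(w, SOME x. x \<in> cls w) \<in> rel" by (simp add: cls_def)
  then show ?thesis unfolding lift_def by (simp add: eval_word_rel)
qed

lemma lift_hom: "lift H f \<in> hom G H"
proof (rule homI)
  fix x assume "x \<in> carrier G"
  then show "lift H f x \<in> carrier H" by (auto elim!: carrier_cls simp: lift_cls eval_word_carrier)
next
  fix x y assume "x \<in> carrier G" "y \<in> carrier G"
  then show "lift H f (x \<otimes>\<^bsub>G\<^esub> y) = lift H f x \<otimes> lift H f y"
    by (auto elim!: carrier_cls simp: lift_cls cls_mult eval_word_append)
qed

lemma lift_gen: "i \<in> I \<Longrightarrow> lift H f (gen i) = f i"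
  unfolding gen_def using f by (simp add: lift_cls Pi_iff)

end
end

lemma gen_induct:
  assumes "x \<in> carrier G" "P \<one>\<^bsub>G\<^esub>"
    and "\<And>i y. i \<in> I \<Longrightarrow> y \<in> carrier G \<Longrightarrow> P y \<Longrightarrow> P (gen i \<otimes>\<^bsub>G\<^esub> y)"
    and "\<And>i y. i \<in> I \<Longrightarrow> y \<in> carrier G \<Longrightarrow> P y \<Longrightarrow> P (inv\<^bsub>G\<^esub> gen i \<otimes>\<^bsub>G\<^esub> y)"
  shows "P x"
proof -
  have "P (cls w)" if "w \<in> Words" for w
    using that
  proof (induction w)
    case Nil then show ?case using assms(2) by (simp add: one_G)
  next
    case (Cons c w)
    obtain i b where c: "c = (i, b)" by (cases c)
    have i: "i \<in> I" and w: "w \<in> Words" using Cons.prems c by auto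
    show ?case using Cons.IH[OF w] assms(3,4)[OF i cls_in_carrier[OF w]] c i w
      by (cases b) (auto simp: cls_Cons_True cls_Cons_False)
  qed
  then show ?thesis using assms(1) by (auto elim: carrier_cls)
qed

lemma replicate_words[simp]: "i \<in> I \<Longrightarrow> replicate k (i, b) \<in> Words"
  by (auto simp: pres_words_def)

lemma eval_word_replicate:
  assumes "group H" "f \<in> I \<rightarrow> carrier H" "i \<in> I"
  shows "eval_word H f (replicate k (i, True)) = f i [^]\<^bsub>H\<^esub> k"
proof -
  interpret H: group H by fact
  have fi: "f i \<in> carrier H" using assms by auto
  show ?thesis by (induction k) (auto simp: fi H.nat_pow_Suc2 simp del: nat_pow_Suc H.nat_pow_Suc)
qed

lemma eval_word_concat_replicate:
  assumes "group H" "f \<in> I \<rightarrow> carrier H" "i \<in> I" "j \<in> I"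
  shows "eval_word H f (concat (replicate k [(i, True), (j, True)])) = (f i \<otimes>\<^bsub>H\<^esub> f j) [^]\<^bsub>H\<^esub> k"
proof -
  interpret H: group H by fact
  have fi: "f i \<in> carrier H" "f j \<in> carrier H" using assms by auto
  have w: "concat (replicate k [(i, True), (j, True)]) \<in> Words" for k
    using assms by (auto simp: pres_words_def)
  show ?thesis
  proof (induction k)
    case 0 then show ?case by simp
  next
    case (Suc k)
    have "eval_word H f (concat (replicate (Suc k) [(i, True), (j, True)]))
       = f i \<otimes>\<^bsub>H\<^esub> (f j \<otimes>\<^bsub>H\<^esub> eval_word H f (concat (replicate k [(i, True), (j, True)])))"
      by simp
    also have "\<dots> = (f i \<otimes>\<^bsub>H\<^esub> f j) [^]\<^bsub>H\<^esub> Suc k"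
      using Suc fi by (simp add: H.nat_pow_Suc2 H.m_assoc del: nat_pow_Suc H.nat_pow_Suc)
    finally show ?case .
  qed
qed

lemma cls_replicate: "i \<in> I \<Longrightarrow> cls (replicate k (i, True)) = gen i [^]\<^bsub>G\<^esub> k"
proof (induction k)
  case 0 then show ?case by (simp add: one_G)
next
  case (Suc k)
  interpret group G by (rule group_presented)
  have "gen i \<otimes>\<^bsub>G\<^esub> gen i [^]\<^bsub>G\<^esub> k = gen i [^]\<^bsub>G\<^esub> Suc k"
    by (rule nat_pow_Suc2[symmetric]) (use gen_carrier Suc.prems in auto)
  then show ?case using Suc by (simp add: cls_Cons_True gen_carrier del: nat_pow_Suc)
qed

lemma cls_evalw: "w \<in> Words \<Longrightarrow> cls w = eval_word G gen w"
proof (induction w)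
  case Nil then show ?case by (simp add: one_G)
next
  case (Cons c w)
  obtain i b where c: "c = (i, b)" by (cases c)
  then show ?case using Cons by (cases b) (auto simp: cls_Cons_True cls_Cons_False)
qed

lemma gen_funcset: "gen \<in> I \<rightarrow> carrier G"
  using gen_carrier by auto

lemma gen_relator: "r \<in> R \<Longrightarrow> eval_word G gen r = \<one>\<^bsub>G\<^esub>"
  using cls_evalw[of r] cls_eqI[OF rel_relator] R_words by (auto simp: one_G)

end

section \<open>Normal forms in a free product of cyclic groups\<close>

definition cyclic_relators :: "nat list \<Rightarrow> (nat \<times> bool) list set" where
  "cyclic_relators ms = {replicate (ms ! l) (l, True) | l. l < length ms}"

locale cyclic_free_product =
  fixes ms :: "nat list"
  assumes ms_ge: "\<And>l. l < length ms \<Longrightarrow> 2 \<le> ms ! l"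
begin

sublocale presentation "{..<length ms}" "cyclic_relators ms"
  by unfold_locales (auto simp: cyclic_relators_def pres_words_def)

sublocale F: group G by (rule group_presented)

abbreviation "L \<equiv> length ms"

lemma gen_closed: "l < L \<Longrightarrow> gen l \<in> carrier G"
  using gen_carrier by simp

lemma free_product_cyclic_eq: "free_product_cyclic ms = G"
  by (simp add: free_product_cyclic_def cyclic_relators_def)

text \<open>Normal forms are lists of syllables (l, k), standing for x_l^k with 0 < k < ms ! l, in which
  adjacent syllables belong to different factors; act l k z is the normal form of x_l^k z.\<close>
fun reduced :: "(nat \<times> nat) list \<Rightarrow> bool" where
  "reduced [] = True"
| "reduced ((l, k) # z) = (l < L \<and> 0 < k \<and> k < ms ! l \<and> reduced z \<and> (case z of [] \<Rightarrow> True | (l', _) # _ \<Rightarrow> l' \<noteq> l))"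

fun act :: "nat \<Rightarrow> nat \<Rightarrow> (nat \<times> nat) list \<Rightarrow> (nat \<times> nat) list" where
  "act l k [] = (if k mod ms ! l = 0 then [] else [(l, k mod ms ! l)])"
| "act l k ((l', k') # z) =
    (if l = l' then (if (k + k') mod ms ! l = 0 then z else (l, (k + k') mod ms ! l) # z)
     else (if k mod ms ! l = 0 then (l', k') # z else (l, k mod ms ! l) # (l', k') # z))"

definition head_gen :: "(nat \<times> nat) list \<Rightarrow> nat option" where
  "head_gen z = (case z of [] \<Rightarrow> None | (l, _) # _ \<Rightarrow> Some l)"

lemma reduced_Cons_iff: "reduced ((l, k) # z) \<longleftrightarrow> l < L \<and> 0 < k \<and> k < ms ! l \<and> reduced z \<and> head_gen z \<noteq> Some l"
  by (auto simp: head_gen_def split: list.splits)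

lemma act_other: "reduced z \<Longrightarrow> head_gen z \<noteq> Some l \<Longrightarrow>
   act l k z = (if k mod ms ! l = 0 then z else (l, k mod ms ! l) # z)"
  by (cases z) (auto simp: head_gen_def)

lemma act_reduced: "reduced z \<Longrightarrow> l < L \<Longrightarrow> reduced (act l k z)"
proof (cases z)
  case Nil
  assume "l < L"
  then show ?thesis using Nil ms_ge[of l] by (auto simp: head_gen_def)
next
  case (Cons p z')
  obtain l' k' where p: "p = (l', k')" by (cases p)
  assume r: "reduced z" and l: "l < L"
  have m: "2 \<le> ms ! l" using ms_ge l by auto
  show ?thesis
  proof (cases "l = l'")
    case True
    then show ?thesis using r l m Cons p by (auto simp: reduced_Cons_iff)
  next
    case False
    then show ?thesis using r l m Cons p by (auto simp: reduced_Cons_iff head_gen_def)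
  qed
qed

lemma act_0: "reduced z \<Longrightarrow> l < L \<Longrightarrow> k mod ms ! l = 0 \<Longrightarrow> act l k z = z"
proof (cases z)
  case (Cons p z')
  obtain l' k' where p: "p = (l', k')" by (cases p)
  assume r: "reduced z" and l: "l < L" and k: "k mod ms ! l = 0"
  show ?thesis
  proof (cases "l = l'")
    case True
    then have "(k + k') mod ms ! l = k'" using r Cons p k by (auto simp: mod_add_left_eq[symmetric])
    then show ?thesis using True r Cons p by auto
  qed (use Cons p k in auto)
qed auto

lemma act_act: "reduced z \<Longrightarrow> l < L \<Longrightarrow> act l a (act l b z) = act l (a + b) z"
proof -
  assume r: "reduced z" and l: "l < L"
  define m where "m = ms ! l"
  have m: "2 \<le> m" using ms_ge l m_def by auto
  show ?thesis
  proof (cases "head_gen z = Some l")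
    case False
    then have ab: "act l b z = (if b mod m = 0 then z else (l, b mod m) # z)"
      using act_other r m_def by auto
    show ?thesis
    proof (cases "b mod m = 0")
      case True
      then show ?thesis using ab act_other[OF r False] m_def
        by (auto simp: mod_add_right_eq[symmetric])
    next
      case bF: False
      have "act l a ((l, b mod m) # z) = act l (a + b) z"
        using act_other[OF r False] m_def by (auto simp: mod_add_right_eq)
      then show ?thesis using ab bF by simp
    qed
  next
    case True
    then obtain k' z' where z: "z = (l, k') # z'" by (auto simp: head_gen_def split: list.splits)
    have z': "reduced z'" "head_gen z' \<noteq> Some l" and k': "k' < m" using r z reduced_Cons_iff m_def by auto
    show ?thesis
    proof (cases "(b + k') mod m = 0")
      case True
      then have "(a + b + k') mod m = a mod m" by (metis add.assoc mod_add_right_eq add.right_neutral)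
      then show ?thesis using True z act_other[OF z'] m_def by (auto simp: add.assoc)
    next
      case False
      have "(a + (b + k') mod m) mod m = (a + b + k') mod m" by (simp add: mod_add_right_eq add.assoc)
      then show ?thesis using False z m_def by (auto simp: add.assoc)
    qed
  qed
qed

definition act_word :: "(nat \<times> bool) list \<Rightarrow> (nat \<times> nat) list \<Rightarrow> (nat \<times> nat) list" where
  "act_word w z = foldr (\<lambda>(l, b) z. act l (if b then 1 else ms ! l - 1) z) w z"

lemma act_word_simps[simp]: "act_word [] z = z" "act_word ((l, b) # w) z = act l (if b then 1 else ms ! l - 1) (act_word w z)"
  by (simp_all add: act_word_def)

lemma act_word_append: "act_word (u @ v) z = act_word u (act_word v z)"
  by (simp add: act_word_def)

lemma act_word_reduced: "w \<in> Words \<Longrightarrow> reduced z \<Longrightarrow> reduced (act_word w z)"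
  by (induction w) (auto intro: act_reduced)

lemma act_word_replicate: "l < L \<Longrightarrow> reduced z \<Longrightarrow> act_word (replicate k (l, True)) z = act l k z"
proof (induction k)
  case 0 then show ?case by (simp add: act_0)
next
  case (Suc k)
  then show ?case by (simp add: act_act)
qed

lemma act_word_R: "r \<in> cyclic_relators ms \<Longrightarrow> reduced z \<Longrightarrow> act_word r z = z"
  by (auto simp: cyclic_relators_def act_word_replicate act_0)

lemma act_word_triv: "l < L \<Longrightarrow> reduced z \<Longrightarrow> act_word [(l, b), (l, \<not> b)] z = z"
proof -
  assume l: "l < L" and z: "reduced z"
  have m: "2 \<le> ms ! l" using ms_ge l by auto
  have "1 + (ms ! l - 1) = ms ! l" "ms ! l - 1 + 1 = ms ! l" using m by auto
  then show ?thesis using l z m by (cases b) (auto simp: act_act act_0)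
qed

definition nf :: "(nat \<times> bool) list \<Rightarrow> (nat \<times> nat) list" where
  "nf w = act_word w []"

lemma nf_reduced: "w \<in> Words \<Longrightarrow> reduced (nf w)"
  by (simp add: nf_def act_word_reduced)

lemma nf_append: "nf (u @ v) = act_word u (nf v)"
  by (simp add: nf_def act_word_append)

lemma nf_replicate: "l < L \<Longrightarrow> nf (replicate k (l, True)) = act l k []"
  by (simp add: nf_def act_word_replicate)

lemma act_word_step: "(a, b) \<in> Step \<Longrightarrow> reduced z \<Longrightarrow> act_word a z = act_word b z"
proof -
  assume "(a, b) \<in> Step" and z: "reduced z"
  then obtain u v r where ab: "a = u @ v" "b = u @ r @ v" "u \<in> Words" "v \<in> Words"
    and r: "r \<in> cyclic_relators ms \<union> {[(i, b), (i, \<not> b)] | i b. i \<in> {..<L}}"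
    unfolding pres_step_def by blast
  have "reduced (act_word v z)" using act_word_reduced ab z by auto
  then have "act_word r (act_word v z) = act_word v z" using r act_word_R act_word_triv by auto
  then show ?thesis using ab by (simp add: act_word_append)
qed

lemma nf_rel: "(a, b) \<in> rel \<Longrightarrow> nf a = nf b"
proof -
  assume "(a, b) \<in> rel"
  then have "(a, b) \<in> (Step \<union> Step\<inverse>)\<^sup>*" by (simp add: pres_rel_def)
  then show ?thesis unfolding nf_def
    by (induction rule: rtrancl_induct) (auto dest!: act_word_step[of _ _ "[]"])
qed

definition word_of :: "(nat \<times> nat) list \<Rightarrow> (nat \<times> bool) list" where
  "word_of z = concat (map (\<lambda>(l, k). replicate k (l, True)) z)"

lemma word_of_simps[simp]: "word_of [] = []" "word_of ((l, k) # z) = replicate k (l, True) @ word_of z"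
  by (simp_all add: word_of_def)

lemma word_of_append: "word_of (a @ b) = word_of a @ word_of b"
  by (simp add: word_of_def)

lemma word_of_words: "reduced z \<Longrightarrow> word_of z \<in> Words"
  by (induction z rule: reduced.induct) (auto simp: pres_words_def)

lemma gen_pow_order: "l < L \<Longrightarrow> gen l [^]\<^bsub>G\<^esub> (ms ! l) = \<one>\<^bsub>G\<^esub>"
proof -
  assume l: "l < L"
  have "replicate (ms ! l) (l, True) \<in> cyclic_relators ms" using l by (auto simp: cyclic_relators_def)
  then have "cls (replicate (ms ! l) (l, True)) = cls []" by (intro cls_eqI rel_relator)
  then show ?thesis using l by (simp add: cls_replicate one_G)
qed

lemma gen_pow_mod: "l < L \<Longrightarrow> gen l [^]\<^bsub>G\<^esub> k = gen l [^]\<^bsub>G\<^esub> (k mod ms ! l)"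
proof -
  assume l: "l < L"
  have "k = ms ! l * (k div ms ! l) + k mod ms ! l" by simp
  then have "gen l [^]\<^bsub>G\<^esub> k = (gen l [^]\<^bsub>G\<^esub> (ms ! l)) [^]\<^bsub>G\<^esub> (k div ms ! l) \<otimes>\<^bsub>G\<^esub> gen l [^]\<^bsub>G\<^esub> (k mod ms ! l)"
    using l gen_carrier by (metis F.nat_pow_mult F.nat_pow_pow lessThan_iff)
  then show ?thesis using l gen_pow_order gen_carrier by simp
qed

lemma cls_word_of_act: "reduced z \<Longrightarrow> l < L \<Longrightarrow>
  cls (word_of (act l k z)) = gen l [^]\<^bsub>G\<^esub> k \<otimes>\<^bsub>G\<^esub> cls (word_of z)"
proof -
  assume r: "reduced z" and l: "l < L"
  define m where "m = ms ! l"
  have m: "2 \<le> m" using ms_ge l m_def by auto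
  have g: "gen l \<in> carrier G" using l gen_carrier by auto
  have wz: "word_of z \<in> Words" using word_of_words r by auto
  have cz: "cls (word_of z) \<in> carrier G" using cls_in_carrier wz by auto
  have cons: "cls (word_of ((l, j) # z')) = gen l [^]\<^bsub>G\<^esub> j \<otimes>\<^bsub>G\<^esub> cls (word_of z')" if "reduced z'" for j z'
    using that l by (simp add: cls_replicate[symmetric] cls_mult word_of_words)
  show ?thesis
  proof (cases "head_gen z = Some l")
    case False
    then show ?thesis using act_other[OF r False] cons[OF r] gen_pow_mod[OF l, of k] cz g
      by (auto simp: m_def)
  next
    case True
    then obtain k' z' where z: "z = (l, k') # z'" by (auto simp: head_gen_def split: list.splits)
    have z': "reduced z'" using r z by auto
    have cz': "cls (word_of z') \<in> carrier G" using cls_in_carrier word_of_words z' by auto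
    have e: "gen l [^]\<^bsub>G\<^esub> k \<otimes>\<^bsub>G\<^esub> cls (word_of z) = gen l [^]\<^bsub>G\<^esub> (k + k') \<otimes>\<^bsub>G\<^esub> cls (word_of z')"
      using cons[OF z'] z g cz' by (simp add: F.m_assoc[symmetric] F.nat_pow_mult)
    show ?thesis
      using e gen_pow_mod[OF l, of "k + k'"] cons[OF z'] z g cz' by (auto simp: m_def)
  qed
qed

lemma cls_nf: "w \<in> Words \<Longrightarrow> cls (word_of (nf w)) = cls w"
proof (induction w)
  case Nil then show ?case by (simp add: nf_def)
next
  case (Cons c w)
  obtain l b where c: "c = (l, b)" by (cases c)
  have l: "l < L" and w: "w \<in> Words" using Cons.prems c by auto
  have r: "reduced (nf w)" using nf_reduced w by auto
  have g: "gen l \<in> carrier G" using l gen_carrier by auto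
  have m: "2 \<le> ms ! l" using ms_ge l by auto
  have nfc: "nf (c # w) = act l (if b then 1 else ms ! l - 1) (nf w)"
    using c by (simp add: nf_def)
  show ?case
  proof (cases b)
    case True
    then show ?thesis using nfc cls_word_of_act[OF r l] Cons.IH[OF w] c l w
      by (simp add: cls_Cons_True g)
  next
    case False
    have "gen l [^]\<^bsub>G\<^esub> (ms ! l - 1) = inv\<^bsub>G\<^esub> gen l"
    proof -
      have "gen l [^]\<^bsub>G\<^esub> (ms ! l - 1) \<otimes>\<^bsub>G\<^esub> gen l = \<one>\<^bsub>G\<^esub>"
        using gen_pow_order[OF l] m g by (metis F.nat_pow_Suc Suc_diff_1 le_trans one_le_numeral not_one_le_zero gr0I)
      then show ?thesis using g by (simp add: F.inv_equality)
    qed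
    then show ?thesis using nfc cls_word_of_act[OF r l] Cons.IH[OF w] c l w False
      by (simp add: cls_Cons_False g)
  qed
qed

definition NF :: "(nat \<times> bool) list set \<Rightarrow> (nat \<times> nat) list" where
  "NF A = nf (SOME w. w \<in> A)"

lemma NF_cls: "w \<in> Words \<Longrightarrow> NF (cls w) = nf w"
proof -
  assume w: "w \<in> Words"
  have "(SOME x. x \<in> cls w) \<in> cls w" using mem_cls[OF w] by (rule someI)
  then have "(w, SOME x. x \<in> cls w) \<in> rel" by (simp add: cls_def)
  then show ?thesis unfolding NF_def by (simp add: nf_rel)
qed

lemma NF_reduced: "x \<in> carrier G \<Longrightarrow> reduced (NF x)"
  by (auto elim!: carrier_cls simp: NF_cls nf_reduced)

lemma NF_inv: "x \<in> carrier G \<Longrightarrow> cls (word_of (NF x)) = x"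
  by (auto elim!: carrier_cls simp: NF_cls cls_nf)

lemma nf_word_of: "reduced z \<Longrightarrow> nf (word_of z) = z"
proof (induction z rule: reduced.induct)
  case 1 then show ?case by (simp add: nf_def)
next
  case (2 l k z)
  have l: "l < L" and z: "reduced z" and h: "head_gen z \<noteq> Some l" and k: "0 < k" "k < ms ! l"
    using 2(2) reduced_Cons_iff by auto
  have "nf (word_of ((l, k) # z)) = act l k z"
    using 2(1)[OF z] l z by (simp add: nf_append act_word_replicate)
  then show ?case using act_other[OF z h] k by simp
qed

lemma act_word_word_of: "reduced (r @ z) \<Longrightarrow> act_word (word_of r) z = r @ z"
proof (induction r)
  case Nil then show ?case by simp
next
  case (Cons p r)
  obtain l k where p: "p = (l, k)" by (cases p)
  have l: "l < L" and rz: "reduced (r @ z)" and h: "head_gen (r @ z) \<noteq> Some l" and k: "0 < k" "k < ms ! l"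
    using Cons.prems p reduced_Cons_iff by auto
  have "act_word (word_of (p # r)) z = act l k (r @ z)"
    using Cons.IH[OF rz] l rz p by (simp add: act_word_append act_word_replicate)
  then show ?case using act_other[OF rz h] k p by simp
qed

lemma reduced_append: "reduced (a @ b) \<longleftrightarrow> reduced a \<and> reduced b \<and> (a = [] \<or> b = [] \<or> fst (last a) \<noteq> fst (hd b))"
proof (induction a)
  case Nil then show ?case by simp
next
  case (Cons p a)
  obtain l k where p: "p = (l, k)" by (cases p)
  show ?case using Cons p
    by (cases a; cases b) (auto simp: reduced_Cons_iff head_gen_def split: list.splits)
qed

lemma act_word_word_of_snoc:
  assumes r: "reduced r" "r \<noteq> []" "fst (last r) \<noteq> a" and a: "a < L" and j: "0 < j" "j < ms ! a"
  shows "act_word (word_of r) [(a, j)] = r @ [(a, j)]"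
  using r a j by (intro act_word_word_of) (simp add: reduced_append)

lemma length_act_word_word_of_snoc:
  assumes r: "reduced r" "r \<noteq> []" "fst (last r) = a" and a: "a < L" and j: "0 < j" "j < ms ! a"
  shows "length (act_word (word_of r) [(a, j)]) \<le> length r"
proof -
  obtain r0 k0 where rp: "r = r0 @ [(a, k0)]"
    using r by (cases r rule: rev_exhaust) (auto intro: prod.exhaust)
  have r0: "reduced r0" "r0 = [] \<or> fst (last r0) \<noteq> a" and k0: "0 < k0" "k0 < ms ! a"
    using r(1) rp by (auto simp: reduced_append)
  have m: "2 \<le> ms ! a" using ms_ge a by auto
  have c: "act a k0 [(a, j)] = [] \<or> (\<exists>i. act a k0 [(a, j)] = [(a, i)] \<and> reduced [(a, i)])"
    using a m by auto
  then have "reduced (r0 @ act a k0 [(a, j)])"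
    using r0 by (auto simp: reduced_append)
  then have "act_word (word_of r) [(a, j)] = r0 @ act a k0 [(a, j)]"
    using rp a j by (simp add: word_of_append act_word_append act_word_replicate act_word_word_of del: act.simps)
  then show ?thesis using c rp by auto
qed

lemma NF_gen_pow_mult:
  assumes u: "u \<in> carrier G" and a: "a < L"
  shows "NF (gen a [^]\<^bsub>G\<^esub> s \<otimes>\<^bsub>G\<^esub> u) = act a s (NF u)"
proof -
  have r: "reduced (NF u)" and uu: "u = cls (word_of (NF u))" using NF_reduced[OF u] NF_inv[OF u] by simp_all
  have "replicate k (a, True) \<in> Words" for k using a by simp
  then show ?thesis using a r word_of_words[OF r]
    by (subst uu) (simp add: cls_replicate[symmetric] cls_mult NF_cls nf_append act_word_replicate nf_word_of)
qed

lemma NF_mult_gen_pow: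
  assumes u: "u \<in> carrier G" and a: "a < L"
  shows "NF (u \<otimes>\<^bsub>G\<^esub> gen a [^]\<^bsub>G\<^esub> t) = act_word (word_of (NF u)) (act a t [])"
proof -
  have r: "reduced (NF u)" and uu: "u = cls (word_of (NF u))" using NF_reduced[OF u] NF_inv[OF u] by simp_all
  have "replicate k (a, True) \<in> Words" for k using a by simp
  then show ?thesis using a r word_of_words[OF r]
    by (subst uu) (simp add: cls_replicate[symmetric] cls_mult NF_cls nf_append nf_replicate del: act.simps)
qed

text \<open>Comparing normal forms: left multiplication by a power of x_a prepends a letter, right
  multiplication cannot lengthen the normal form by more than that letter at the other end.\<close>
lemma twisted_commute_head:
  assumes u: "u \<in> carrier G" and a: "a < L" and s: "s mod ms ! a \<noteq> 0" and t: "t mod ms ! a \<noteq> 0"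
    and eq: "u \<otimes>\<^bsub>G\<^esub> gen a [^]\<^bsub>G\<^esub> t = gen a [^]\<^bsub>G\<^esub> s \<otimes>\<^bsub>G\<^esub> u"
    and ne: "NF u \<noteq> []"
  shows "fst (hd (NF u)) = a"
proof (rule ccontr)
  assume hne: "fst (hd (NF u)) \<noteq> a"
  define r where "r = NF u"
  have rr: "reduced r" and rne: "r \<noteq> []" using NF_reduced u ne by (simp_all add: r_def)
  have "head_gen r \<noteq> Some a" using hne rne by (auto simp: r_def head_gen_def split: list.splits)
  then have left: "NF (gen a [^]\<^bsub>G\<^esub> s \<otimes>\<^bsub>G\<^esub> u) = (a, s mod ms ! a) # r"
    using NF_gen_pow_mult[OF u a] act_other[OF rr] s by (simp add: r_def)
  have t': "0 < t mod ms ! a" "t mod ms ! a < ms ! a" using t ms_ge[OF a] by auto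
  have right: "NF (u \<otimes>\<^bsub>G\<^esub> gen a [^]\<^bsub>G\<^esub> t) = act_word (word_of r) [(a, t mod ms ! a)]"
    using NF_mult_gen_pow[OF u a] t by (simp add: r_def)
  show False
  proof (cases "fst (last r) = a")
    case False
    then have "(a, s mod ms ! a) # r = r @ [(a, t mod ms ! a)]"
      using eq left right act_word_word_of_snoc[OF rr rne _ a t'] by simp
    then have "hd ((a, s mod ms ! a) # r) = hd (r @ [(a, t mod ms ! a)])" by (rule arg_cong)
    then have "hd r = (a, s mod ms ! a)" using rne by simp
    then show False using hne by (simp add: r_def)
  next
    case True
    have "length ((a, s mod ms ! a) # r) = length (act_word (word_of r) [(a, t mod ms ! a)])"
      using eq left right by simp
    then show False using length_act_word_word_of_snoc[OF rr rne True a t'] by simp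
  qed
qed

end

section \<open>The inversion automorphism of the free product\<close>

context cyclic_free_product
begin

abbreviation "Aut \<equiv> AutoGroup G"

sublocale A: group Aut by (rule F.AutoGroup)

lemma inv_gen_relators: "r \<in> cyclic_relators ms \<Longrightarrow> eval_word G (\<lambda>l. inv\<^bsub>G\<^esub> gen l) r = \<one>\<^bsub>G\<^esub>"
proof -
  assume "r \<in> cyclic_relators ms"
  then obtain l where l: "l < L" and r: "r = replicate (ms ! l) (l, True)"
    unfolding cyclic_relators_def by auto
  have "eval_word G (\<lambda>l. inv\<^bsub>G\<^esub> gen l) r = inv\<^bsub>G\<^esub> gen l [^]\<^bsub>G\<^esub> (ms ! l)"
    unfolding r by (rule eval_word_replicate[OF group_presented]) (use l gen_closed in auto)
  also have "\<dots> = \<one>\<^bsub>G\<^esub>" using l by (simp add: F.nat_pow_inv gen_closed gen_pow_order)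
  finally show ?thesis .
qed

definition inv_gens :: "(nat \<times> bool) list set \<Rightarrow> (nat \<times> bool) list set" where
  "inv_gens = lift G (\<lambda>l. inv\<^bsub>G\<^esub> gen l)"

lemma inv_gens: "inv_gens \<in> hom G G" "\<And>l. l < L \<Longrightarrow> inv_gens (gen l) = inv\<^bsub>G\<^esub> gen l"
  using lift_hom[OF group_presented _ inv_gen_relators] lift_gen[OF group_presented _ inv_gen_relators]
  by (auto simp: inv_gens_def gen_closed)

sublocale inv_gens: group_hom G G inv_gens
  by (simp add: group_hom_def group_hom_axioms_def F.is_group inv_gens(1))

lemma inv_gens_inv_gens: "x \<in> carrier G \<Longrightarrow> inv_gens (inv_gens x) = x"
proof -
  have "id \<in> hom G G" using id_iso by (simp add: iso_def)
  then have "(inv_gens \<circ> inv_gens) x = id x" if "x \<in> carrier G" for x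
    using hom_eq_on_gens[OF group_presented hom_compose[OF inv_gens(1) inv_gens(1)] _ _ that]
    by (simp add: inv_gens gen_carrier)
  then show "x \<in> carrier G \<Longrightarrow> inv_gens (inv_gens x) = x" by simp
qed

definition inversion :: "(nat \<times> bool) list set \<Rightarrow> (nat \<times> bool) list set" where
  "inversion = restrict inv_gens (carrier G)"

lemma inversion_apply: "x \<in> carrier G \<Longrightarrow> inversion x = inv_gens x"
  by (simp add: inversion_def)

lemma inversion_auto: "inversion \<in> auto G"
proof -
  have "inversion \<in> hom G G" by (rule homI) (auto simp: inversion_apply)
  moreover have "bij_betw inversion (carrier G) (carrier G)"
    by (rule bij_betwI[where g=inversion]) (auto simp: inversion_apply inv_gens_inv_gens)
  ultimately show ?thesis by (simp add: auto_def Bij_def inversion_def)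
qed

lemma inversion_carrier: "inversion \<in> carrier Aut"
  by (simp add: AutoGroup_carrier inversion_auto)

lemma inversion_square: "inversion \<otimes>\<^bsub>Aut\<^esub> inversion = \<one>\<^bsub>Aut\<^esub>"
  by (rule auto_ext[where G=G])
    (simp_all add: inversion_auto F.one_auto F.auto_mult_closed F.AutoGroup_apply F.AutoGroup_one_apply
      inversion_apply inv_gens_inv_gens)

lemma inversion_conj_aut:
  "g \<in> carrier G \<Longrightarrow> inversion \<otimes>\<^bsub>Aut\<^esub> conj_aut G g = conj_aut G (inv_gens g) \<otimes>\<^bsub>Aut\<^esub> inversion"
  by (rule auto_ext[where G=G])
    (simp_all add: inversion_auto F.conj_aut_auto F.auto_mult_closed F.AutoGroup_apply inversion_apply
      F.conj_aut_apply)

lemma inversion_conj_aut_inversion: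
  "g \<in> carrier G \<Longrightarrow> inversion \<otimes>\<^bsub>Aut\<^esub> conj_aut G g \<otimes>\<^bsub>Aut\<^esub> inversion = conj_aut G (inv_gens g)"
  using inversion_conj_aut inversion_square by (simp add: A.m_assoc F.conj_aut_carrier inversion_carrier)

lemma NF_gen_pow: "l < L \<Longrightarrow> NF (gen l [^]\<^bsub>G\<^esub> k) = act l k []"
  by (simp add: cls_replicate[symmetric] NF_cls nf_replicate del: act.simps)

text \<open>By twisted_commute_head, the first letter of such an element would lie in every factor.\<close>
lemma twisted_central_trivial:
  assumes u: "u \<in> carrier G" and L: "2 \<le> L"
    and st: "\<And>a. a < L \<Longrightarrow> s a mod ms ! a \<noteq> 0 \<and> t a mod ms ! a \<noteq> 0"
    and twist: "\<And>a. a < L \<Longrightarrow> u \<otimes>\<^bsub>G\<^esub> gen a [^]\<^bsub>G\<^esub> t a = gen a [^]\<^bsub>G\<^esub> s a \<otimes>\<^bsub>G\<^esub> u"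
  shows "u = \<one>\<^bsub>G\<^esub>"
proof -
  have "NF u = []"
  proof (rule ccontr)
    assume "NF u \<noteq> []"
    then have h: "fst (hd (NF u)) = a" if "a < L" for a
      using twisted_commute_head[OF u that] st[OF that] twist[OF that] by blast
    have "fst (hd (NF u)) = 0" using h[of 0] L by linarith
    moreover have "fst (hd (NF u)) = 1" using h[of 1] L by linarith
    ultimately show False by simp
  qed
  then show ?thesis using NF_inv[OF u] by (simp add: one_G)
qed

lemma conj_aut_trivial:
  assumes u: "u \<in> carrier G" and L: "2 \<le> L" and c: "conj_aut G u = \<one>\<^bsub>Aut\<^esub>"
  shows "u = \<one>\<^bsub>G\<^esub>"
proof (rule twisted_central_trivial[OF u L])
  fix a assume a: "a < L"
  then have g: "gen a \<in> carrier G" by (simp add: gen_carrier)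
  show "1 mod ms ! a \<noteq> 0 \<and> 1 mod ms ! a \<noteq> 0" using ms_ge[OF a] by simp
  have "u \<otimes>\<^bsub>G\<^esub> gen a \<otimes>\<^bsub>G\<^esub> inv\<^bsub>G\<^esub> u = gen a"
    using c g F.conj_aut_apply[OF g, of u] by (simp add: F.AutoGroup_one_apply)
  then show "u \<otimes>\<^bsub>G\<^esub> gen a [^]\<^bsub>G\<^esub> (1::nat) = gen a [^]\<^bsub>G\<^esub> (1::nat) \<otimes>\<^bsub>G\<^esub> u"
    using g u by (simp add: F.inv_solve_right')
qed

lemma inv_gen_eq_pow:
  assumes a: "a < L" shows "inv\<^bsub>G\<^esub> gen a = gen a [^]\<^bsub>G\<^esub> (ms ! a - 1)"
proof -
  have g: "gen a \<in> carrier G" using a by (simp add: gen_carrier)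
  have "gen a [^]\<^bsub>G\<^esub> (ms ! a - 1) \<otimes>\<^bsub>G\<^esub> gen a = gen a [^]\<^bsub>G\<^esub> (ms ! a)"
    using ms_ge[OF a] F.nat_pow_Suc[of "gen a" "ms ! a - 1"] by (simp del: F.nat_pow_Suc nat_pow_Suc)
  then show ?thesis using g gen_pow_order[OF a] by (simp add: F.inv_equality)
qed

lemma conj_aut_inversion_ne_one:
  assumes u: "u \<in> carrier G" and L: "2 \<le> L" and m3: "\<And>l. l < L \<Longrightarrow> 3 \<le> ms ! l"
  shows "conj_aut G u \<otimes>\<^bsub>Aut\<^esub> inversion \<noteq> \<one>\<^bsub>Aut\<^esub>"
proof
  assume c: "conj_aut G u \<otimes>\<^bsub>Aut\<^esub> inversion = \<one>\<^bsub>Aut\<^esub>"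
  have twist: "u \<otimes>\<^bsub>G\<^esub> gen a [^]\<^bsub>G\<^esub> (ms ! a - 1) = gen a [^]\<^bsub>G\<^esub> (1::nat) \<otimes>\<^bsub>G\<^esub> u" if a: "a < L" for a
  proof -
    have g: "gen a \<in> carrier G" using a gen_carrier by auto
    have "(conj_aut G u \<otimes>\<^bsub>Aut\<^esub> inversion) (gen a) = gen a" using c g by (simp add: F.AutoGroup_one_apply)
    then have "u \<otimes>\<^bsub>G\<^esub> inv\<^bsub>G\<^esub> gen a \<otimes>\<^bsub>G\<^esub> inv\<^bsub>G\<^esub> u = gen a" using g
      by (simp add: F.AutoGroup_apply F.conj_aut_auto[OF u] inversion_auto inversion_apply inv_gens(2)[OF a] F.conj_aut_apply)
    then show ?thesis using g u inv_gen_eq_pow[OF a] by (simp add: F.inv_solve_right')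
  qed
  have "u = \<one>\<^bsub>G\<^esub>"
  proof (rule twisted_central_trivial[OF u L _ twist])
    fix a assume "a < L"
    then have "3 \<le> ms ! a" by (rule m3)
    then show "(1::nat) mod ms ! a \<noteq> 0 \<and> (ms ! a - 1) mod ms ! a \<noteq> 0" by simp
  qed
  moreover have L0: "0 < L" using L by linarith
  ultimately have "gen 0 [^]\<^bsub>G\<^esub> (ms ! 0 - 1) = gen 0 [^]\<^bsub>G\<^esub> (1::nat)"
    using twist[OF L0] by (simp add: gen_carrier)
  then have "act 0 (ms ! 0 - 1) [] = act 0 1 []" using NF_gen_pow[OF L0] by metis
  then show False using m3[OF L0] by simp
qed

end

section \<open>Spanning trees of the Coxeter graph\<close>

locale bfs_tree =
  fixes n :: nat and m :: "nat \<Rightarrow> nat \<Rightarrow> enat"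
  assumes cm: "coxeter_matrix n m" and conn: "cox_connected n m" and n0: "0 < n"
begin

abbreviation "adj \<equiv> cox_adj n m"
definition Adj :: "(nat \<times> nat) set" where "Adj = {(a, b). adj a b}"

lemma adj_sym: "adj a b \<Longrightarrow> adj b a"
  using cm by (auto simp: cox_adj_def coxeter_matrix_def)

lemma adj_lt: "adj a b \<Longrightarrow> a < n \<and> b < n \<and> a \<noteq> b"
  by (auto simp: cox_adj_def)

lemma reachable_from_root: "v < n \<Longrightarrow> \<exists>k. (0, v) \<in> Adj ^^ k"
  using conn n0 by (auto simp: cox_connected_def Adj_def rtrancl_power)

definition depth :: "nat \<Rightarrow> nat" where
  "depth v = (LEAST k. (0, v) \<in> Adj ^^ k)"

lemma depth_path: "v < n \<Longrightarrow> (0, v) \<in> Adj ^^ depth v"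
  unfolding depth_def using reachable_from_root by (rule LeastI_ex)

lemma depth_le: "(0, v) \<in> Adj ^^ k \<Longrightarrow> depth v \<le> k"
  unfolding depth_def by (rule Least_le)

lemma depth_0: "depth 0 = 0"
  using depth_le[of 0 0] by simp

lemma depth_adj: "adj u v \<Longrightarrow> depth v \<le> Suc (depth u)"
proof -
  assume a: "adj u v"
  then have "(0, u) \<in> Adj ^^ depth u" using depth_path adj_lt by blast
  then have "(0, v) \<in> Adj ^^ Suc (depth u)" using a by (auto simp: Adj_def intro: relpow_Suc_I)
  then show ?thesis by (rule depth_le)
qed

lemma depth_pos: "v < n \<Longrightarrow> v \<noteq> 0 \<Longrightarrow> 0 < depth v"
  using depth_path[of v] by (cases "depth v") auto

lemma parent_ex: "v < n \<Longrightarrow> v \<noteq> 0 \<Longrightarrow> \<exists>u. adj u v \<and> Suc (depth u) = depth v"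
proof -
  assume v: "v < n" "v \<noteq> 0"
  obtain k where k: "depth v = Suc k" using depth_pos[OF v] by (cases "depth v") auto
  then have "(0, v) \<in> Adj ^^ Suc k" using depth_path[OF v(1)] by simp
  then obtain u where u: "(0, u) \<in> Adj ^^ k" "(u, v) \<in> Adj" by (rule relpow_Suc_E)
  have a: "adj u v" using u(2) by (simp add: Adj_def)
  have "depth u \<le> k" using u(1) by (rule depth_le)
  moreover have "depth v \<le> Suc (depth u)" using a by (rule depth_adj)
  ultimately show ?thesis using a k by (intro exI[of _ u]) simp
qed

definition parent :: "nat \<Rightarrow> nat" where
  "parent v = (SOME u. adj u v \<and> Suc (depth u) = depth v)"

lemma parent: "v < n \<Longrightarrow> v \<noteq> 0 \<Longrightarrow> adj (parent v) v \<and> Suc (depth (parent v)) = depth v"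
  unfolding parent_def using parent_ex by (rule someI_ex)

lemma depth_eq0: "v < n \<Longrightarrow> depth v = 0 \<longleftrightarrow> v = 0"
  by (cases "v = 0") (auto simp: depth_0 dest: depth_pos)

definition ancestor :: "nat \<Rightarrow> nat \<Rightarrow> nat" where
  "ancestor v k = (parent ^^ k) v"

lemma ancestor_Suc: "ancestor v (Suc k) = parent (ancestor v k)"
  by (simp add: ancestor_def)

lemma ancestor_props: "v < n \<Longrightarrow> k \<le> depth v \<Longrightarrow> ancestor v k < n \<and> depth (ancestor v k) = depth v - k"
proof (induction k)
  case 0 then show ?case by (simp add: ancestor_def)
next
  case (Suc k)
  then have h: "ancestor v k < n" "depth (ancestor v k) = depth v - k" by auto
  have "ancestor v k \<noteq> 0"
  proof
    assume "ancestor v k = 0" then show False using h Suc.prems depth_0 by simp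
  qed
  then have "adj (parent (ancestor v k)) (ancestor v k) \<and> Suc (depth (parent (ancestor v k))) = depth (ancestor v k)"
    using parent h by auto
  then show ?case using h adj_lt by (auto simp: ancestor_Suc)
qed

lemma ancestor_adj: "v < n \<Longrightarrow> k < depth v \<Longrightarrow> adj (ancestor v (Suc k)) (ancestor v k)"
proof -
  assume v: "v < n" and k: "k < depth v"
  have h: "ancestor v k < n" "depth (ancestor v k) = depth v - k" using ancestor_props v k by auto
  have "ancestor v k \<noteq> 0"
  proof
    assume "ancestor v k = 0" then show False using h k depth_0 by simp
  qed
  then show ?thesis using parent h by (auto simp: ancestor_Suc)
qed

lemma ancestor_inj: "v < n \<Longrightarrow> a \<le> depth v \<Longrightarrow> b \<le> depth v \<Longrightarrow> ancestor v a = ancestor v b \<Longrightarrow> a = b"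
  using ancestor_props[of v a] ancestor_props[of v b] by auto

lemma ancestor_top: "v < n \<Longrightarrow> ancestor v (depth v) = 0"
  using ancestor_props[of v "depth v"] depth_eq0 by auto

lemma successively_map_upt: "(\<And>t. t < k \<Longrightarrow> P (f t) (f (Suc t))) \<Longrightarrow> successively P (map f [0..<Suc k])"
proof (induction k)
  case 0 then show ?case by simp
next
  case (Suc k)
  have "map f [0..<Suc (Suc k)] = map f [0..<Suc k] @ [f (Suc k)]" by simp
  then show ?case using Suc by (simp add: successively_append_iff)
qed

lemma ancestor_paths_cycle:
  assumes i: "i < n" and j: "j < n" and a: "adj i j"
    and k1: "k1 \<le> depth i" and k2: "0 < k2" "k2 \<le> depth j" and long: "3 \<le> Suc k1 + k2"
    and meet: "ancestor i k1 = ancestor j k2"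
    and disj: "\<And>a b. a \<le> k1 \<Longrightarrow> b < k2 \<Longrightarrow> ancestor i a \<noteq> ancestor j b"
  shows "cox_has_cycle n m"
proof -
  obtain k2' where k2': "k2 = Suc k2'" using k2(1) by (cases k2) auto
  define xs where "xs = map (ancestor i) [0..<Suc k1]"
  define ys where "ys = map (ancestor j) [0..<k2]"
  have "distinct (xs @ rev ys)"
  proof -
    have "inj_on (ancestor i) (set [0..<Suc k1])"
      by (rule inj_onI) (use ancestor_inj[OF i] k1 in auto)
    moreover have "inj_on (ancestor j) (set [0..<k2])"
      by (rule inj_onI) (use ancestor_inj[OF j] k2 in auto)
    ultimately have "distinct xs" "distinct ys" unfolding xs_def ys_def distinct_map by simp_all
    moreover have "set xs \<inter> set ys = {}" using disj by (auto simp: xs_def ys_def less_Suc_eq_le)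
    ultimately show ?thesis by simp
  qed
  moreover have "3 \<le> length (xs @ rev ys)" using long by (simp add: xs_def ys_def)
  moreover have "successively adj (xs @ rev ys)"
  proof -
    have "successively adj xs" unfolding xs_def
      by (rule successively_map_upt) (use ancestor_adj[OF i] k1 adj_sym in auto)
    moreover have "successively adj (rev ys)" unfolding ys_def k2' successively_rev
      by (rule successively_map_upt) (use ancestor_adj[OF j] k2 k2' in auto)
    moreover have "adj (last xs) (hd (rev ys))"
      using ancestor_adj[OF j, of k2'] meet k2 k2' by (simp add: xs_def ys_def)
    ultimately show ?thesis by (simp add: successively_append_iff)
  qed
  moreover have "last (xs @ rev ys) = j"
    unfolding ys_def k2' upt_conv_Cons[OF zero_less_Suc] by (simp add: ancestor_def last_rev)
  moreover have "hd (xs @ rev ys) = i"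
    unfolding xs_def upt_conv_Cons[OF zero_less_Suc] by (simp add: ancestor_def)
  ultimately show ?thesis
    unfolding cox_has_cycle_def successively_conv_nth using adj_sym[OF a] by (intro exI[of _ "xs @ rev ys"]) simp
qed

lemma acyclic_adj_parent:
  assumes acyc: "\<not> cox_has_cycle n m" and a: "adj i j"
  shows "(j \<noteq> 0 \<and> i = parent j) \<or> (i \<noteq> 0 \<and> j = parent i)"
proof (rule ccontr)
  assume neg: "\<not> ?thesis"
  have i: "i < n" and j: "j < n" and ij: "i \<noteq> j" using a adj_lt by auto
  have dj: "depth j \<le> Suc (depth i)" and di: "depth i \<le> Suc (depth j)"
    using depth_adj[OF a] depth_adj[OF adj_sym[OF a]] .
  define P where "P k1 \<longleftrightarrow> (\<exists>k2 \<le> depth j. ancestor i k1 = ancestor j k2)" for k1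
  define k1 where "k1 = (LEAST k. P k)"
  have "P (depth i)" unfolding P_def using ancestor_top[OF i] ancestor_top[OF j] by auto
  then have Pk1: "P k1" and k1min: "\<And>k. P k \<Longrightarrow> k1 \<le> k" and k1d: "k1 \<le> depth i"
    unfolding k1_def by (auto intro: LeastI Least_le)
  obtain k2 where k2: "k2 \<le> depth j" "ancestor i k1 = ancestor j k2" using Pk1 unfolding P_def by blast
  have depc: "depth i - k1 = depth j - k2"
    using ancestor_props[OF i k1d] ancestor_props[OF j k2(1)] k2(2) by auto
  have k2p: "0 < k2"
  proof (rule ccontr)
    assume "\<not> 0 < k2"
    then have "k2 = 0" by simp
    then have ji: "j = ancestor i k1" using k2 by (simp add: ancestor_def)
    then have "k1 \<noteq> 0" using ij by (cases k1) (auto simp: ancestor_def)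
    then have "k1 = 1" using depc \<open>k2 = 0\<close> di k1d by arith
    then have "j = parent i" "i \<noteq> 0" using ji k1d depth_eq0[OF i] by (auto simp: ancestor_def)
    then show False using neg by simp
  qed
  have long: "3 \<le> Suc k1 + k2"
  proof (rule ccontr)
    assume "\<not> 3 \<le> Suc k1 + k2"
    then have "k1 = 0" "k2 = 1" using k2p by auto
    then have "i = parent j" "j \<noteq> 0" using k2 depth_eq0[OF j] by (auto simp: ancestor_def)
    then show False using neg by simp
  qed
  have "ancestor i a \<noteq> ancestor j b" if ab: "a \<le> k1" "b < k2" for a b
  proof
    assume eq: "ancestor i a = ancestor j b"
    then have "P a" unfolding P_def using ab k2(1) by (intro exI[of _ b]) auto
    then have "a = k1" using k1min ab(1) by (simp add: le_antisym)
    then have "b = k2" using ancestor_inj[OF j, of b k2] ab k2 eq by simp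
    then show False using ab(2) by simp
  qed
  then have "cox_has_cycle n m"
    using ancestor_paths_cycle[OF i j a k1d k2p k2(1) long k2(2)] by blast
  then show False using acyc by simp
qed

definition parent_edge :: "nat \<Rightarrow> nat \<times> nat" where
  "parent_edge v = (min (parent v) v, max (parent v) v)"

definition parent_exponent :: "nat \<Rightarrow> nat" where
  "parent_exponent v = the_enat (m (parent v) v)"

lemma parent_edge_in_edges:
  assumes "v < n" "v \<noteq> 0"
  shows "parent_edge v \<in> {(i, j). i < j \<and> j < n \<and> m i j \<noteq> \<infinity>}"
proof -
  have "adj (parent v) v" using parent[OF assms] by blast
  then show ?thesis using adj_sym[of "parent v" v]
    by (auto simp: parent_edge_def cox_adj_def min_def max_def)
qed

lemma parent_edge_inj: "inj_on parent_edge {1..<n}"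
proof (rule inj_onI, rule ccontr)
  fix v w assume v: "v \<in> {1..<n}" and w: "w \<in> {1..<n}" and eq: "parent_edge v = parent_edge w" and "v \<noteq> w"
  then have "{parent v, v} = {parent w, w}"
    unfolding parent_edge_def by (cases "parent v \<le> v"; cases "parent w \<le> w") (auto simp: min_def max_def)
  then have "v = parent w" "w = parent v" using \<open>v \<noteq> w\<close> by (auto simp: doubleton_eq_iff)
  then show False using parent[of v] parent[of w] v w by auto
qed

lemma parent_edge_image:
  assumes acyc: "\<not> cox_has_cycle n m"
  shows "parent_edge ` {1..<n} = {(i, j). i < j \<and> j < n \<and> m i j \<noteq> \<infinity>}"
proof (intro equalityI subsetI)
  fix e assume "e \<in> {(i, j). i < j \<and> j < n \<and> m i j \<noteq> \<infinity>}"
  then obtain i j where e: "e = (i, j)" "i < j" "j < n" "m i j \<noteq> \<infinity>" by blast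
  then have "adj i j" by (simp add: cox_adj_def)
  then consider "j \<noteq> 0" "i = parent j" | "i \<noteq> 0" "j = parent i"
    using acyclic_adj_parent[OF acyc] by blast
  then show "e \<in> parent_edge ` {1..<n}"
  proof cases
    case 1 then show ?thesis using e by (intro image_eqI[of _ _ j]) (auto simp: parent_edge_def)
  next
    case 2 then show ?thesis using e by (intro image_eqI[of _ _ i]) (auto simp: parent_edge_def)
  qed
next
  fix e assume "e \<in> parent_edge ` {1..<n}"
  then show "e \<in> {(i, j). i < j \<and> j < n \<and> m i j \<noteq> \<infinity>}" using parent_edge_in_edges by force
qed

lemma finite_exponents_tree:
  assumes "\<not> cox_has_cycle n m"
  shows "finite_exponents n m = image_mset parent_exponent (mset [1..<n])"
proof -
  have "the_enat (m (fst (parent_edge v)) (snd (parent_edge v))) = parent_exponent v"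
    if "v < n" "v \<noteq> 0" for v
    using cm parent[OF that] adj_lt
    by (auto simp: parent_edge_def parent_exponent_def coxeter_matrix_def min_def max_def)
  then have "image_mset (\<lambda>(i, j). the_enat (m i j)) (image_mset parent_edge (mset_set {1..<n}))
      = image_mset parent_exponent (mset_set {1..<n})"
    unfolding multiset.map_comp by (intro image_mset_cong) (auto simp: case_prod_beta)
  moreover have "image_mset parent_edge (mset_set {1..<n}) = mset_set {(i, j). i < j \<and> j < n \<and> m i j \<noteq> \<infinity>}"
    using image_mset_mset_set[OF parent_edge_inj] parent_edge_image[OF assms] by simp
  ultimately show ?thesis unfolding finite_exponents_def mset_upt by simp
qed

lemma parent_exponent_odd:
  assumes odd: "odd_coxeter n m" and v: "v < n" "v \<noteq> 0"
  shows "m (parent v) v = enat (parent_exponent v) \<and> odd (parent_exponent v) \<and> 3 \<le> parent_exponent v"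
proof -
  have a: "parent v < n" "parent v \<noteq> v" "m (parent v) v \<noteq> \<infinity>"
    using parent[OF v] by (auto simp: cox_adj_def)
  moreover have "m (parent v) v = \<infinity> \<or> (\<exists>k. m (parent v) v = enat k \<and> odd k)"
    using odd a v(1) unfolding odd_coxeter_def by simp
  ultimately obtain k where k: "m (parent v) v = enat k" "odd k" by auto
  have "2 \<le> m (parent v) v" using cm a v(1) unfolding coxeter_matrix_def by simp
  then have "2 \<le> k" using k(1) by (simp add: numeral_eq_enat)
  then have "3 \<le> k" using k(2) by presburger
  then show ?thesis using k by (simp add: parent_exponent_def)
qed
end

lemma mset_eq_image_mset_map: "mset xs = image_mset f M \<Longrightarrow> \<exists>ys. mset ys = M \<and> xs = map f ys"
proof (induction xs arbitrary: M)
  case Nil then show ?case by simp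
next
  case (Cons x xs)
  have "x \<in># image_mset f M" using Cons.prems by (metis list.set_intros(1) set_mset_mset)
  then obtain y where y: "y \<in># M" "x = f y" by auto
  have "add_mset x (mset xs) = image_mset f M" using Cons.prems by simp
  then have "mset xs = image_mset f M - {#x#}" by (metis add_mset_remove_trivial)
  then have "mset xs = image_mset f (M - {#y#})" using y by (simp add: image_mset_Diff)
  then obtain ys where "mset ys = M - {#y#}" "xs = map f ys" using Cons.IH by blast
  then show ?case using y by (intro exI[of _ "y # ys"]) auto
qed

text \<open>A rooted spanning tree of the Coxeter graph with root 0, parent function and depth, whose
  edges are labelled bijectively by the factors of the free product: the edge from v to its parent
  has label l = label v (with child l = v), and its exponent is ms ! l.\<close>
locale coxeter_tree = cyclic_free_product +
  fixes n :: nat and m :: "nat \<Rightarrow> nat \<Rightarrow> enat"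
    and parent :: "nat \<Rightarrow> nat" and label :: "nat \<Rightarrow> nat" and child :: "nat \<Rightarrow> nat" and depth :: "nat \<Rightarrow> nat"
  assumes n0: "0 < n" and cm: "coxeter_matrix n m"
  and parent_props: "\<And>v. v < n \<Longrightarrow> v \<noteq> 0 \<Longrightarrow> parent v < n \<and> Suc (depth (parent v)) = depth v \<and> label v < length ms \<and> child (label v) = v \<and> m (parent v) v = enat (ms ! label v)"
  and depth_root: "depth 0 = 0"
  and child_props: "\<And>l. l < length ms \<Longrightarrow> child l < n \<and> child l \<noteq> 0 \<and> label (child l) = l"
  and edge_parent: "\<And>i j k. i < n \<Longrightarrow> j < n \<Longrightarrow> i \<noteq> j \<Longrightarrow> m i j = enat k \<Longrightarrow> (j \<noteq> 0 \<and> i = parent j) \<or> (i \<noteq> 0 \<and> j = parent i)"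
  and exponent_odd: "\<And>l. l < length ms \<Longrightarrow> odd (ms ! l) \<and> 3 \<le> ms ! l"
  and L_ge_2: "2 \<le> length ms"

lemma coxeter_tree_exists:
  assumes cm: "coxeter_matrix n m" and odd: "odd_coxeter n m" and tree: "cox_tree n m"
    and n3: "n \<ge> 3" and ms: "mset ms = finite_exponents n m"
  shows "\<exists>parent label child depth. coxeter_tree ms n m parent label child depth"
proof -
  interpret T: bfs_tree n m using cm tree n3 by unfold_locales (auto simp: cox_tree_def)
  have acyc: "\<not> cox_has_cycle n m" using tree by (simp add: cox_tree_def)
  obtain ys where ys: "mset ys = mset [1..<n]" and ms_ys: "ms = map T.parent_exponent ys"
    using mset_eq_image_mset_map[of ms _ "mset [1..<n]"] ms T.finite_exponents_tree[OF acyc] by auto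
  have dist: "distinct ys" and set_ys: "set ys = {1..<n}" and len: "length ys = n - 1"
    using ys by (metis distinct_upt mset_eq_imp_distinct_iff, metis set_mset_mset set_upt,
        metis length_upt size_mset)
  have bij: "bij_betw ((!) ys) {..<length ys} {1..<n}"
    using bij_betw_nth[OF dist refl set_ys[symmetric]] .
  define label where "label = inv_into {..<length ys} ((!) ys)"
  have label: "label v < length ms" "ys ! label v = v" if "v < n" "v \<noteq> 0" for v
    using that bij_betw_inv_into[OF bij] f_inv_into_f[of v "(!) ys"] bij
    by (auto simp: label_def ms_ys bij_betw_def dest: bij_betwE)
  have "coxeter_tree ms n m T.parent label ((!) ys) T.depth"
  proof
    fix l assume l: "l < length ms"
    then have v: "ys ! l < n" "ys ! l \<noteq> 0" using set_ys len nth_mem[of l ys] by (auto simp: ms_ys)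
    show "ys ! l < n \<and> ys ! l \<noteq> 0 \<and> label (ys ! l) = l"
      using v l bij by (auto simp: label_def ms_ys bij_betw_def inv_into_f_f)
    show "odd (ms ! l) \<and> 3 \<le> ms ! l" "2 \<le> ms ! l"
      using l T.parent_exponent_odd[OF odd v] by (auto simp: ms_ys)
  next
    fix v assume v: "v < n" "v \<noteq> 0"
    show "T.parent v < n \<and> Suc (T.depth (T.parent v)) = T.depth v \<and> label v < length ms
        \<and> ys ! label v = v \<and> m (T.parent v) v = enat (ms ! label v)"
      using T.parent[OF v] T.adj_lt label[OF v] T.parent_exponent_odd[OF odd v]
      by (auto simp: ms_ys)
  next
    fix i j k assume "i < n" "j < n" "i \<noteq> j" "m i j = enat k"
    then show "(j \<noteq> 0 \<and> i = T.parent j) \<or> (i \<noteq> 0 \<and> j = T.parent i)"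
      by (intro T.acyclic_adj_parent[OF acyc]) (auto simp: cox_adj_def)
  qed (use n3 len in \<open>auto simp: ms_ys T.depth_0 cm\<close>)
  then show ?thesis by blast
qed

section \<open>The embedding\<close>

context coxeter_tree
begin

sublocale C: presentation "{..<n}" "coxeter_relators n m"
  by unfold_locales (auto simp: coxeter_relators_def pres_words_def split: if_splits)

sublocale Cox: group C.G by (rule C.group_presented)

abbreviation "cgen \<equiv> C.gen"

abbreviation "s0 \<equiv> cgen 0"

primrec tree_rec_aux :: "(nat \<Rightarrow> 'x \<Rightarrow> 'x) \<Rightarrow> 'x \<Rightarrow> nat \<Rightarrow> nat \<Rightarrow> 'x" where
  "tree_rec_aux g x0 0 v = x0"
| "tree_rec_aux g x0 (Suc k) v = g v (tree_rec_aux g x0 k (parent v))"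

definition tree_rec :: "(nat \<Rightarrow> 'x \<Rightarrow> 'x) \<Rightarrow> 'x \<Rightarrow> nat \<Rightarrow> 'x" where
  "tree_rec g x0 v = tree_rec_aux g x0 (depth v) v"

lemma tree_rec_root: "tree_rec g x0 0 = x0"
  by (simp add: tree_rec_def depth_root)

lemma tree_rec_step: "v < n \<Longrightarrow> v \<noteq> 0 \<Longrightarrow> tree_rec g x0 v = g v (tree_rec g x0 (parent v))"
proof -
  assume "v < n" "v \<noteq> 0"
  then have "depth v = Suc (depth (parent v))" using parent_props by simp
  then show ?thesis by (simp add: tree_rec_def)
qed

lemma tree_induct[consumes 1, case_names root step]:
  assumes v: "v < n" and root: "P 0" and step: "\<And>v. v < n \<Longrightarrow> v \<noteq> 0 \<Longrightarrow> P (parent v) \<Longrightarrow> P v"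
  shows "P v"
proof -
  have "\<forall>v. v < n \<longrightarrow> depth v = k \<longrightarrow> P v" for k
  proof (induction k)
    case 0
    then show ?case using root parent_props by fastforce
  next
    case (Suc k)
    show ?case
    proof (intro allI impI)
      fix v assume v: "v < n" "depth v = Suc k"
      show "P v"
      proof (cases "v = 0")
        case False
        then have "parent v < n" "depth (parent v) = k" using parent_props[OF v(1)] v(2) by auto
        then show ?thesis using step[OF v(1) False] Suc.IH by blast
      qed (use root in simp)
    qed
  qed
  then show ?thesis using v by blast
qed

lemma parent_bounds: "v < n \<Longrightarrow> v \<noteq> 0 \<Longrightarrow> parent v < n \<and> label v < L"
  using parent_props by blast

lemma child_bounds: "l < L \<Longrightarrow> child l < n \<and> child l \<noteq> 0 \<and> parent (child l) < n"
  using child_props parent_props by blast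

definition half :: "nat \<Rightarrow> nat" where "half l = (ms ! l - 1) div 2"

lemma half: "l < L \<Longrightarrow> Suc (2 * half l) = ms ! l"
  using exponent_odd[of l] by (auto simp: half_def elim!: oddE)

definition half_pow :: "nat \<Rightarrow> (nat \<times> bool) list set" where
  "half_pow l = gen l [^]\<^bsub>G\<^esub> half l"

definition root_path :: "nat \<Rightarrow> (nat \<times> bool) list set" where
  "root_path = tree_rec (\<lambda>v x. x \<otimes>\<^bsub>G\<^esub> half_pow (label v)) \<one>\<^bsub>G\<^esub>"

lemma root_path_root: "root_path 0 = \<one>\<^bsub>G\<^esub>"
  by (simp add: root_path_def tree_rec_root)

lemma root_path_step: "v < n \<Longrightarrow> v \<noteq> 0 \<Longrightarrow> root_path v = root_path (parent v) \<otimes>\<^bsub>G\<^esub> half_pow (label v)"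
  unfolding root_path_def by (rule tree_rec_step)

lemma half_pow_carrier: "l < L \<Longrightarrow> half_pow l \<in> carrier G"
  by (simp add: half_pow_def gen_closed)

lemma root_path_carrier: "v < n \<Longrightarrow> root_path v \<in> carrier G"
proof (induction v rule: tree_induct)
  case (step v)
  then show ?case using parent_bounds[OF step.hyps] by (simp add: root_path_step half_pow_carrier)
qed (simp add: root_path_root)

lemma inv_gens_half_pow: "l < L \<Longrightarrow> inv_gens (half_pow l) \<otimes>\<^bsub>G\<^esub> inv\<^bsub>G\<^esub> half_pow l = gen l"
proof -
  assume l: "l < L"
  have g: "gen l \<in> carrier G" using gen_closed[OF l] .
  have "inv_gens (half_pow l) = inv\<^bsub>G\<^esub> half_pow l"
    using g l by (simp add: half_pow_def inv_gens.hom_nat_pow inv_gens F.nat_pow_inv)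
  then have "inv_gens (half_pow l) \<otimes>\<^bsub>G\<^esub> inv\<^bsub>G\<^esub> half_pow l = inv\<^bsub>G\<^esub> (gen l [^]\<^bsub>G\<^esub> (half l + half l))"
    using g by (simp add: half_pow_def F.inv_mult_group[symmetric] F.nat_pow_mult)
  also have "\<dots> = gen l"
  proof (rule F.inv_equality)
    show "gen l \<otimes>\<^bsub>G\<^esub> gen l [^]\<^bsub>G\<^esub> (half l + half l) = \<one>\<^bsub>G\<^esub>"
      using half[OF l] g gen_pow_order[OF l] by (simp add: F.nat_pow_Suc2[symmetric] mult_2)
  qed (use g in simp_all)
  finally show ?thesis .
qed

definition refl_aut :: "nat \<Rightarrow> (nat \<times> bool) list set \<Rightarrow> (nat \<times> bool) list set" where
  "refl_aut v = conj_aut G (root_path v) \<otimes>\<^bsub>Aut\<^esub> inversion \<otimes>\<^bsub>Aut\<^esub> inv\<^bsub>Aut\<^esub> conj_aut G (root_path v)"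

lemma refl_aut_carrier: "v < n \<Longrightarrow> refl_aut v \<in> carrier Aut"
  by (simp add: refl_aut_def F.conj_aut_carrier inversion_carrier root_path_carrier)

lemma refl_aut_square: "v < n \<Longrightarrow> refl_aut v \<otimes>\<^bsub>Aut\<^esub> refl_aut v = \<one>\<^bsub>Aut\<^esub>"
  unfolding refl_aut_def
  by (rule A.conj_involution) (simp_all add: F.conj_aut_carrier inversion_carrier root_path_carrier inversion_square)

lemma refl_aut_root: "refl_aut 0 = inversion"
  unfolding refl_aut_def by (simp add: root_path_root F.conj_aut_one inversion_carrier)

text \<open>Since a generator x of order 2e + 1 satisfies x^(-2e) = x, the product of the images of two
  adjacent generators is an inner automorphism.\<close>
lemma refl_aut_edge:
  assumes v: "v < n" "v \<noteq> 0"
  shows "refl_aut (parent v) \<otimes>\<^bsub>Aut\<^esub> refl_aut v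
    = conj_aut G (root_path (parent v) \<otimes>\<^bsub>G\<^esub> gen (label v) \<otimes>\<^bsub>G\<^esub> inv\<^bsub>G\<^esub> root_path (parent v))"
proof -
  define p where "p = parent v"
  define l where "l = label v"
  have p: "p < n" and l: "l < L" using parent_bounds[OF v] by (simp_all add: p_def l_def)
  have ap: "root_path p \<in> carrier G" and y: "half_pow l \<in> carrier G"
    using root_path_carrier[OF p] half_pow_carrier[OF l] .
  have av: "root_path v = root_path p \<otimes>\<^bsub>G\<^esub> half_pow l" using root_path_step[OF v] by (simp add: p_def l_def)
  have "refl_aut p \<otimes>\<^bsub>Aut\<^esub> refl_aut v = conj_aut G (root_path p) \<otimes>\<^bsub>Aut\<^esub>
      ((inversion \<otimes>\<^bsub>Aut\<^esub> conj_aut G (half_pow l) \<otimes>\<^bsub>Aut\<^esub> inversion) \<otimes>\<^bsub>Aut\<^esub> inv\<^bsub>Aut\<^esub> conj_aut G (half_pow l))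
      \<otimes>\<^bsub>Aut\<^esub> inv\<^bsub>Aut\<^esub> conj_aut G (root_path p)"
    unfolding refl_aut_def av F.conj_aut_mult[OF ap y]
    by (rule A.conj_mult_conj) (simp_all add: F.conj_aut_carrier inversion_carrier ap y)
  also have "\<dots> = conj_aut G (root_path p) \<otimes>\<^bsub>Aut\<^esub> conj_aut G (gen l) \<otimes>\<^bsub>Aut\<^esub> conj_aut G (inv\<^bsub>G\<^esub> root_path p)"
    using y ap by (simp add: inversion_conj_aut_inversion F.conj_aut_inv[symmetric] F.conj_aut_mult[symmetric]
        inv_gens_half_pow[OF l])
  also have "\<dots> = conj_aut G (root_path p \<otimes>\<^bsub>G\<^esub> gen l \<otimes>\<^bsub>G\<^esub> inv\<^bsub>G\<^esub> root_path p)"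
    using ap gen_closed[OF l] by (simp add: F.conj_aut_mult)
  finally show ?thesis unfolding p_def l_def .
qed

lemma refl_aut_edge_pow:
  assumes v: "v < n" "v \<noteq> 0"
  shows "(refl_aut (parent v) \<otimes>\<^bsub>Aut\<^esub> refl_aut v) [^]\<^bsub>Aut\<^esub> (ms ! label v) = \<one>\<^bsub>Aut\<^esub>"
proof -
  have p: "parent v < n" and l: "label v < L" using parent_bounds[OF v] by simp_all
  have ap: "root_path (parent v) \<in> carrier G" using root_path_carrier[OF p] .
  have "(refl_aut (parent v) \<otimes>\<^bsub>Aut\<^esub> refl_aut v) [^]\<^bsub>Aut\<^esub> (ms ! label v)
      = conj_aut G ((root_path (parent v) \<otimes>\<^bsub>G\<^esub> gen (label v) \<otimes>\<^bsub>G\<^esub> inv\<^bsub>G\<^esub> root_path (parent v)) [^]\<^bsub>G\<^esub> (ms ! label v))"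
    using refl_aut_edge[OF v] ap gen_closed[OF l] by (simp add: F.conj_aut_pow)
  also have "\<dots> = conj_aut G \<one>\<^bsub>G\<^esub>"
    using ap gen_closed[OF l] by (simp add: F.conj_pow gen_pow_order[OF l])
  finally show ?thesis by (simp add: F.conj_aut_one)
qed

lemma refl_aut_relation:
  assumes i: "i < n" and j: "j < n" and k: "m i j = enat k"
  shows "(refl_aut i \<otimes>\<^bsub>Aut\<^esub> refl_aut j) [^]\<^bsub>Aut\<^esub> k = \<one>\<^bsub>Aut\<^esub>"
proof (cases "i = j")
  case True
  then have "k = 1" using k cm i by (auto simp: coxeter_matrix_def one_enat_def)
  then show ?thesis using True refl_aut_square[OF i] refl_aut_carrier[OF i] by simp
next
  case False
  have mji: "m j i = enat k" using k cm i j by (simp add: coxeter_matrix_def)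
  consider "j \<noteq> 0" "i = parent j" | "i \<noteq> 0" "j = parent i" using edge_parent[OF i j False k] by blast
  then show ?thesis
  proof cases
    case 1
    then show ?thesis using refl_aut_edge_pow[OF j] parent_props[OF j] k by simp
  next
    case 2
    have pi: "parent i < n" using parent_bounds[OF i \<open>i \<noteq> 0\<close>] by simp
    have "refl_aut i \<otimes>\<^bsub>Aut\<^esub> refl_aut (parent i) = inv\<^bsub>Aut\<^esub> (refl_aut (parent i) \<otimes>\<^bsub>Aut\<^esub> refl_aut i)"
      using refl_aut_carrier[OF i] refl_aut_carrier[OF pi] refl_aut_square[OF i] refl_aut_square[OF pi]
      by (simp add: A.inv_mult_group A.invol_inv)
    then have "(refl_aut i \<otimes>\<^bsub>Aut\<^esub> refl_aut (parent i)) [^]\<^bsub>Aut\<^esub> k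
        = inv\<^bsub>Aut\<^esub> ((refl_aut (parent i) \<otimes>\<^bsub>Aut\<^esub> refl_aut i) [^]\<^bsub>Aut\<^esub> k)"
      using refl_aut_carrier[OF i] refl_aut_carrier[OF pi] by (simp add: A.nat_pow_inv)
    moreover have "k = ms ! label i" using parent_props[OF i \<open>i \<noteq> 0\<close>] mji 2 by simp
    ultimately show ?thesis using refl_aut_edge_pow[OF i \<open>i \<noteq> 0\<close>] 2 by simp
  qed
qed

lemma refl_aut_funcset: "refl_aut \<in> {..<n} \<rightarrow> carrier Aut"
  using refl_aut_carrier by auto

lemma refl_aut_relators: "r \<in> coxeter_relators n m \<Longrightarrow> eval_word Aut refl_aut r = \<one>\<^bsub>Aut\<^esub>"
  unfolding coxeter_relators_def
  using C.eval_word_concat_replicate[OF A.is_group refl_aut_funcset] refl_aut_relation by auto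

definition Phi :: "(nat \<times> bool) list set \<Rightarrow> (nat \<times> bool) list set \<Rightarrow> (nat \<times> bool) list set" where
  "Phi = C.lift Aut refl_aut"

lemma Phi_hom: "Phi \<in> hom C.G Aut"
  unfolding Phi_def by (rule C.lift_hom[OF A.is_group refl_aut_funcset refl_aut_relators])

lemma Phi_cgen: "i < n \<Longrightarrow> Phi (cgen i) = refl_aut i"
  unfolding Phi_def by (simp add: C.lift_gen[OF A.is_group refl_aut_funcset refl_aut_relators])

sublocale Phi: group_hom C.G Aut Phi
  by (simp add: group_hom_def group_hom_axioms_def C.group_presented A.is_group Phi_hom)

lemma cgen_carrier: "i < n \<Longrightarrow> cgen i \<in> carrier C.G"
  by (simp add: C.gen_carrier)

lemma cgen_relation:
  "i < n \<Longrightarrow> j < n \<Longrightarrow> m i j = enat k \<Longrightarrow> (cgen i \<otimes>\<^bsub>C.G\<^esub> cgen j) [^]\<^bsub>C.G\<^esub> k = \<one>\<^bsub>C.G\<^esub>"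
  using C.gen_relator[of "concat (replicate k [(i, True), (j, True)])"]
    C.eval_word_concat_replicate[OF C.group_presented C.gen_funcset]
  by (auto simp: coxeter_relators_def)

lemma cgen_square: "i < n \<Longrightarrow> cgen i \<otimes>\<^bsub>C.G\<^esub> cgen i = \<one>\<^bsub>C.G\<^esub>"
  using cgen_relation[of i i 1] cgen_carrier[of i] cm by (simp add: coxeter_matrix_def one_enat_def)

text \<open>The inverse direction: rho v mirrors root_path v in the Coxeter group, the generator of the
  edge above v being replaced by a conjugate of the product of the two reflections at its ends.\<close>
definition rho :: "nat \<Rightarrow> (nat \<times> bool) list set" where
  "rho = tree_rec (\<lambda>v x. x \<otimes>\<^bsub>C.G\<^esub> (inv\<^bsub>C.G\<^esub> x \<otimes>\<^bsub>C.G\<^esub> cgen (parent v) \<otimes>\<^bsub>C.G\<^esub> cgen v \<otimes>\<^bsub>C.G\<^esub> x) [^]\<^bsub>C.G\<^esub> half (label v))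
     \<one>\<^bsub>C.G\<^esub>"

definition edge_rot :: "nat \<Rightarrow> (nat \<times> bool) list set" where
  "edge_rot l = inv\<^bsub>C.G\<^esub> rho (parent (child l)) \<otimes>\<^bsub>C.G\<^esub> cgen (parent (child l)) \<otimes>\<^bsub>C.G\<^esub> cgen (child l)
     \<otimes>\<^bsub>C.G\<^esub> rho (parent (child l))"

lemma edge_rot_label:
  "v < n \<Longrightarrow> v \<noteq> 0 \<Longrightarrow> edge_rot (label v) = inv\<^bsub>C.G\<^esub> rho (parent v) \<otimes>\<^bsub>C.G\<^esub> cgen (parent v) \<otimes>\<^bsub>C.G\<^esub> cgen v \<otimes>\<^bsub>C.G\<^esub> rho (parent v)"
  using parent_props[of v] by (simp add: edge_rot_def)

lemma rho_root: "rho 0 = \<one>\<^bsub>C.G\<^esub>"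
  by (simp add: rho_def tree_rec_root)

lemma rho_step: "v < n \<Longrightarrow> v \<noteq> 0 \<Longrightarrow> rho v = rho (parent v) \<otimes>\<^bsub>C.G\<^esub> edge_rot (label v) [^]\<^bsub>C.G\<^esub> half (label v)"
  by (simp add: edge_rot_label) (simp add: rho_def tree_rec_step)

lemma rho_carrier: "v < n \<Longrightarrow> rho v \<in> carrier C.G"
proof (induction v rule: tree_induct)
  case (step v)
  then show ?case using parent_bounds[OF step.hyps] by (simp add: rho_step edge_rot_label cgen_carrier)
qed (simp add: rho_root)

lemma edge_rot_carrier: "l < L \<Longrightarrow> edge_rot l \<in> carrier C.G"
  using child_bounds[of l] by (simp add: edge_rot_def rho_carrier cgen_carrier)

lemma edge_rot_pow: "l < L \<Longrightarrow> edge_rot l [^]\<^bsub>C.G\<^esub> (ms ! l) = \<one>\<^bsub>C.G\<^esub>"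
proof -
  assume l: "l < L"
  define c where "c = child l"
  have c: "c < n" "c \<noteq> 0" "parent c < n" "label c = l"
    using child_bounds[OF l] child_props[OF l] by (simp_all add: c_def)
  have r: "inv\<^bsub>C.G\<^esub> rho (parent c) \<in> carrier C.G" using rho_carrier[OF c(3)] by simp
  have "edge_rot l = inv\<^bsub>C.G\<^esub> rho (parent c) \<otimes>\<^bsub>C.G\<^esub> (cgen (parent c) \<otimes>\<^bsub>C.G\<^esub> cgen c)
      \<otimes>\<^bsub>C.G\<^esub> inv\<^bsub>C.G\<^esub> (inv\<^bsub>C.G\<^esub> rho (parent c))"
    unfolding edge_rot_def c_def[symmetric] using rho_carrier[OF c(3)] cgen_carrier c by (simp add: Cox.m_assoc)
  then show ?thesis
    using Cox.conj_pow[OF r, of "cgen (parent c) \<otimes>\<^bsub>C.G\<^esub> cgen c" "ms ! l"] cgen_carrier c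
      cgen_relation[OF c(3) c(1)] parent_props[OF c(1,2)] r
    by simp
qed

lemma edge_rot_funcset: "edge_rot \<in> {..<L} \<rightarrow> carrier C.G"
  using edge_rot_carrier by auto

lemma edge_rot_relators: "r \<in> cyclic_relators ms \<Longrightarrow> eval_word C.G edge_rot r = \<one>\<^bsub>C.G\<^esub>"
  unfolding cyclic_relators_def
  using eval_word_replicate[OF C.group_presented edge_rot_funcset] edge_rot_pow by auto

definition psi :: "(nat \<times> bool) list set \<Rightarrow> (nat \<times> bool) list set" where
  "psi = lift C.G edge_rot"

lemma psi_hom: "psi \<in> hom G C.G"
  unfolding psi_def by (rule lift_hom[OF C.group_presented edge_rot_funcset edge_rot_relators])

lemma psi_gen: "l < L \<Longrightarrow> psi (gen l) = edge_rot l"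
  unfolding psi_def by (simp add: lift_gen[OF C.group_presented edge_rot_funcset edge_rot_relators])

sublocale psi: group_hom G C.G psi
  by (simp add: group_hom_def group_hom_axioms_def C.group_presented group_presented psi_hom)

lemma rho_eq_psi: "v < n \<Longrightarrow> rho v = psi (root_path v)"
proof (induction v rule: tree_induct)
  case (step v)
  then show ?case using parent_bounds[OF step.hyps] root_path_carrier[of "parent v"]
    by (simp add: rho_step root_path_step half_pow_def gen_closed psi_gen psi.hom_nat_pow)
qed (simp add: rho_root root_path_root)

lemma Phi_edge_rot_step:
  assumes v: "v < n" "v \<noteq> 0" and IH: "Phi (rho (parent v)) = conj_aut G (root_path (parent v))"
  shows "Phi (edge_rot (label v)) = conj_aut G (gen (label v))"
proof -
  have p: "parent v < n" and l: "label v < L" using parent_bounds[OF v] by simp_all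
  have ap: "root_path (parent v) \<in> carrier G" using root_path_carrier[OF p] .
  have "Phi (edge_rot (label v)) = inv\<^bsub>Aut\<^esub> conj_aut G (root_path (parent v))
      \<otimes>\<^bsub>Aut\<^esub> (refl_aut (parent v) \<otimes>\<^bsub>Aut\<^esub> refl_aut v) \<otimes>\<^bsub>Aut\<^esub> conj_aut G (root_path (parent v))"
    using rho_carrier[OF p] cgen_carrier p v IH refl_aut_carrier F.conj_aut_carrier[OF ap]
    by (simp add: edge_rot_label Phi_cgen A.m_assoc Phi.hom_inv)
  also have "refl_aut (parent v) \<otimes>\<^bsub>Aut\<^esub> refl_aut v = conj_aut G (root_path (parent v)) \<otimes>\<^bsub>Aut\<^esub>
      conj_aut G (gen (label v)) \<otimes>\<^bsub>Aut\<^esub> inv\<^bsub>Aut\<^esub> conj_aut G (root_path (parent v))"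
    using refl_aut_edge[OF v] ap gen_closed[OF l] by (simp add: F.conj_aut_mult F.conj_aut_inv)
  finally show ?thesis using ap gen_closed[OF l] by (simp add: F.conj_aut_carrier A.m_assoc)
qed

lemma Phi_rho: "v < n \<Longrightarrow> Phi (rho v) = conj_aut G (root_path v)"
proof (induction v rule: tree_induct)
  case (step v)
  have p: "parent v < n" and l: "label v < L" using parent_bounds[OF step.hyps] by simp_all
  have "Phi (rho v) = conj_aut G (root_path (parent v)) \<otimes>\<^bsub>Aut\<^esub> conj_aut G (gen (label v)) [^]\<^bsub>Aut\<^esub> half (label v)"
    using rho_step[OF step.hyps] rho_carrier[OF p] edge_rot_carrier[OF l] step.IH Phi_edge_rot_step[OF step.hyps step.IH]
    by (simp add: Phi.hom_nat_pow)
  also have "\<dots> = conj_aut G (root_path v)"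
    using root_path_step[OF step.hyps] root_path_carrier[OF p] gen_closed[OF l]
    by (simp add: F.conj_aut_pow F.conj_aut_mult half_pow_def)
  finally show ?case .
qed (simp add: rho_root root_path_root F.conj_aut_one)

lemma Phi_psi: "u \<in> carrier G \<Longrightarrow> Phi (psi u) = conj_aut G u"
proof -
  have "Phi (edge_rot l) = conj_aut G (gen l)" if "l < L" for l
    using Phi_edge_rot_step[of "child l"] Phi_rho child_bounds[OF that] child_props[OF that] by simp
  then have "(Phi \<circ> psi) u = conj_aut G u" if "u \<in> carrier G" for u
    using hom_eq_on_gens[OF A.is_group hom_compose[OF psi_hom Phi_hom] F.conj_aut_hom _ that]
    by (simp add: psi_gen)
  then show "u \<in> carrier G \<Longrightarrow> Phi (psi u) = conj_aut G u" by simp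
qed

lemma s0_carrier: "s0 \<in> carrier C.G" and s0_square: "s0 \<otimes>\<^bsub>C.G\<^esub> s0 = \<one>\<^bsub>C.G\<^esub>"
  using cgen_carrier cgen_square n0 by simp_all

lemma edge_rot_eq:
  assumes v: "v < n" "v \<noteq> 0"
    and IH: "cgen (parent v) = rho (parent v) \<otimes>\<^bsub>C.G\<^esub> s0 \<otimes>\<^bsub>C.G\<^esub> inv\<^bsub>C.G\<^esub> rho (parent v)"
  shows "edge_rot (label v) = s0 \<otimes>\<^bsub>C.G\<^esub> (inv\<^bsub>C.G\<^esub> rho (parent v) \<otimes>\<^bsub>C.G\<^esub> cgen v \<otimes>\<^bsub>C.G\<^esub> rho (parent v))"
  using rho_carrier[of "parent v"] parent_bounds[OF v] s0_carrier cgen_carrier[OF v(1)]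
  by (simp add: edge_rot_label[OF v] IH Cox.m_assoc)

text \<open>Reflections at adjacent vertices generate a dihedral group of odd order, in which all
  reflections are conjugate; this propagates the conjugacy to s0 down the tree.\<close>
lemma cgen_conj_root: "v < n \<Longrightarrow> cgen v = rho v \<otimes>\<^bsub>C.G\<^esub> s0 \<otimes>\<^bsub>C.G\<^esub> inv\<^bsub>C.G\<^esub> rho v"
proof (induction v rule: tree_induct)
  case (step v)
  define r where "r = rho (parent v)"
  define t where "t = inv\<^bsub>C.G\<^esub> r \<otimes>\<^bsub>C.G\<^esub> cgen v \<otimes>\<^bsub>C.G\<^esub> r"
  define e where "e = half (label v)"
  have p: "parent v < n" and l: "label v < L" using parent_bounds[OF step.hyps] by simp_all
  have r: "r \<in> carrier C.G" using rho_carrier[OF p] by (simp add: r_def)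
  have t: "t \<in> carrier C.G" "t \<otimes>\<^bsub>C.G\<^esub> t = \<one>\<^bsub>C.G\<^esub>"
    using Cox.conj_involution[of "inv\<^bsub>C.G\<^esub> r" "cgen v"] r cgen_carrier[OF step.hyps(1)] cgen_square[OF step.hyps(1)]
    by (simp_all add: t_def)
  have z: "edge_rot (label v) = s0 \<otimes>\<^bsub>C.G\<^esub> t"
    using edge_rot_eq[OF step.hyps step.IH] by (simp add: r_def t_def)
  have "(s0 \<otimes>\<^bsub>C.G\<^esub> t) [^]\<^bsub>C.G\<^esub> Suc (2 * e) = \<one>\<^bsub>C.G\<^esub>"
    using edge_rot_pow[OF l] half[OF l] z by (simp add: e_def)
  then have dihedral: "(s0 \<otimes>\<^bsub>C.G\<^esub> t) [^]\<^bsub>C.G\<^esub> e \<otimes>\<^bsub>C.G\<^esub> s0 \<otimes>\<^bsub>C.G\<^esub> inv\<^bsub>C.G\<^esub> ((s0 \<otimes>\<^bsub>C.G\<^esub> t) [^]\<^bsub>C.G\<^esub> e) = t"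
    by (rule Cox.odd_dihedral_conj[OF s0_carrier t(1) s0_square t(2)])
  have zc: "(s0 \<otimes>\<^bsub>C.G\<^esub> t) [^]\<^bsub>C.G\<^esub> e \<in> carrier C.G" using s0_carrier t(1) by simp
  have "rho v \<otimes>\<^bsub>C.G\<^esub> s0 \<otimes>\<^bsub>C.G\<^esub> inv\<^bsub>C.G\<^esub> rho v = r \<otimes>\<^bsub>C.G\<^esub>
      ((s0 \<otimes>\<^bsub>C.G\<^esub> t) [^]\<^bsub>C.G\<^esub> e \<otimes>\<^bsub>C.G\<^esub> s0 \<otimes>\<^bsub>C.G\<^esub> inv\<^bsub>C.G\<^esub> ((s0 \<otimes>\<^bsub>C.G\<^esub> t) [^]\<^bsub>C.G\<^esub> e)) \<otimes>\<^bsub>C.G\<^esub> inv\<^bsub>C.G\<^esub> r"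
    using rho_step[OF step.hyps] z r zc s0_carrier by (simp add: r_def e_def Cox.m_assoc Cox.inv_mult_group)
  also have "\<dots> = cgen v"
    unfolding dihedral using r cgen_carrier[OF step.hyps(1)] by (simp add: t_def Cox.m_assoc)
  finally show ?case by simp
qed (simp add: rho_root s0_carrier)

lemma edge_rot_conj: "l < L \<Longrightarrow> s0 \<otimes>\<^bsub>C.G\<^esub> edge_rot l \<otimes>\<^bsub>C.G\<^esub> s0 = inv\<^bsub>C.G\<^esub> edge_rot l"
proof -
  assume l: "l < L"
  define v where "v = child l"
  have v: "v < n" "v \<noteq> 0" "parent v < n" "label v = l"
    using child_bounds[OF l] child_props[OF l] by (simp_all add: v_def)
  define t where "t = inv\<^bsub>C.G\<^esub> rho (parent v) \<otimes>\<^bsub>C.G\<^esub> cgen v \<otimes>\<^bsub>C.G\<^esub> rho (parent v)"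
  have t: "t \<in> carrier C.G" "t \<otimes>\<^bsub>C.G\<^esub> t = \<one>\<^bsub>C.G\<^esub>"
    using Cox.conj_involution[of "inv\<^bsub>C.G\<^esub> rho (parent v)" "cgen v"] rho_carrier[OF v(3)]
      cgen_carrier[OF v(1)] cgen_square[OF v(1)]
    by (simp_all add: t_def)
  have "edge_rot l = s0 \<otimes>\<^bsub>C.G\<^esub> t"
    using edge_rot_eq[OF v(1,2) cgen_conj_root[OF v(3)]] v(4) by (simp add: t_def)
  then show ?thesis using Cox.involution_mult_conj[OF s0_carrier t(1) s0_square t(2)] by simp
qed

lemma psi_conj: "u \<in> carrier G \<Longrightarrow> s0 \<otimes>\<^bsub>C.G\<^esub> psi u \<otimes>\<^bsub>C.G\<^esub> s0 = psi (inv_gens u)"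
proof -
  have conj_hom: "(\<lambda>u. s0 \<otimes>\<^bsub>C.G\<^esub> psi u \<otimes>\<^bsub>C.G\<^esub> s0) \<in> hom G C.G"
    by (rule homI) (simp_all add: s0_carrier Cox.m_assoc Cox.invol_cancel[OF s0_carrier s0_square])
  have "s0 \<otimes>\<^bsub>C.G\<^esub> psi (gen l) \<otimes>\<^bsub>C.G\<^esub> s0 = (psi \<circ> inv_gens) (gen l)" if "l \<in> {..<L}" for l
    using that edge_rot_conj gen_closed by (simp add: psi_gen inv_gens)
  then show "u \<in> carrier G \<Longrightarrow> ?thesis"
    using hom_eq_on_gens[OF C.group_presented conj_hom hom_compose[OF inv_gens(1) psi_hom]] by simp
qed

lemma cgen_mult_psi:
  assumes i: "i < n" and u: "u \<in> carrier G"
  shows "cgen i \<otimes>\<^bsub>C.G\<^esub> psi u = psi (root_path i \<otimes>\<^bsub>G\<^esub> inv_gens (inv\<^bsub>G\<^esub> root_path i \<otimes>\<^bsub>G\<^esub> u)) \<otimes>\<^bsub>C.G\<^esub> s0"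
proof -
  define p where "p = root_path i"
  have p: "p \<in> carrier G" using root_path_carrier[OF i] by (simp add: p_def)
  have "cgen i \<otimes>\<^bsub>C.G\<^esub> psi u = psi p \<otimes>\<^bsub>C.G\<^esub> (s0 \<otimes>\<^bsub>C.G\<^esub> psi (inv\<^bsub>G\<^esub> p \<otimes>\<^bsub>G\<^esub> u) \<otimes>\<^bsub>C.G\<^esub> s0) \<otimes>\<^bsub>C.G\<^esub> s0"
    using cgen_conj_root[OF i] rho_eq_psi[OF i] p u s0_carrier s0_square Cox.invol_cancel[OF s0_carrier s0_square]
    by (simp add: p_def psi.hom_inv Cox.m_assoc)
  also have "\<dots> = psi p \<otimes>\<^bsub>C.G\<^esub> psi (inv_gens (inv\<^bsub>G\<^esub> p \<otimes>\<^bsub>G\<^esub> u)) \<otimes>\<^bsub>C.G\<^esub> s0"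
    using psi_conj[of "inv\<^bsub>G\<^esub> p \<otimes>\<^bsub>G\<^esub> u"] p u by (simp only: F.m_closed F.inv_closed)
  also have "\<dots> = psi (p \<otimes>\<^bsub>G\<^esub> inv_gens (inv\<^bsub>G\<^esub> p \<otimes>\<^bsub>G\<^esub> u)) \<otimes>\<^bsub>C.G\<^esub> s0"
    using p u by simp
  finally show ?thesis by (simp add: p_def)
qed

lemma coset_cover:
  assumes x: "x \<in> carrier C.G"
  shows "\<exists>u\<in>carrier G. x = psi u \<or> x = psi u \<otimes>\<^bsub>C.G\<^esub> s0"
proof -
  define P where "P x \<longleftrightarrow> (\<exists>u\<in>carrier G. x = psi u \<or> x = psi u \<otimes>\<^bsub>C.G\<^esub> s0)" for x
  have step: "P (cgen i \<otimes>\<^bsub>C.G\<^esub> y)" if i: "i < n" and y: "y \<in> carrier C.G" and IH: "P y" for i y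
  proof -
    obtain u where u: "u \<in> carrier G" "y = psi u \<or> y = psi u \<otimes>\<^bsub>C.G\<^esub> s0" using IH unfolding P_def by blast
    define w where "w = root_path i \<otimes>\<^bsub>G\<^esub> inv_gens (inv\<^bsub>G\<^esub> root_path i \<otimes>\<^bsub>G\<^esub> u)"
    have w: "w \<in> carrier G" "cgen i \<otimes>\<^bsub>C.G\<^esub> psi u = psi w \<otimes>\<^bsub>C.G\<^esub> s0"
      using cgen_mult_psi[OF i u(1)] root_path_carrier[OF i] u(1) by (simp_all add: w_def)
    from u(2) show ?thesis
    proof
      assume "y = psi u \<otimes>\<^bsub>C.G\<^esub> s0"
      then have "cgen i \<otimes>\<^bsub>C.G\<^esub> y = psi w \<otimes>\<^bsub>C.G\<^esub> (s0 \<otimes>\<^bsub>C.G\<^esub> s0)"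
        using w u(1) s0_carrier cgen_carrier[OF i] by (simp add: Cox.m_assoc[symmetric])
      then have "cgen i \<otimes>\<^bsub>C.G\<^esub> y = psi w" using w(1) s0_square by simp
      then show ?thesis using w(1) unfolding P_def by blast
    qed (use w in \<open>auto simp: P_def\<close>)
  qed
  have "P x"
  proof (rule C.gen_induct[OF x])
    show "P \<one>\<^bsub>C.G\<^esub>" unfolding P_def using F.one_closed psi.hom_one by metis
  next
    fix i y assume "i \<in> {..<n}" "y \<in> carrier C.G" "P y"
    then show "P (cgen i \<otimes>\<^bsub>C.G\<^esub> y)" "P (inv\<^bsub>C.G\<^esub> cgen i \<otimes>\<^bsub>C.G\<^esub> y)"
      using step Cox.invol_inv[OF cgen_carrier cgen_square] by simp_all
  qed
  then show ?thesis unfolding P_def .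
qed

lemma Phi_kernel: "kernel C.G Aut Phi = {\<one>\<^bsub>C.G\<^esub>}"
proof -
  have "x = \<one>\<^bsub>C.G\<^esub>" if x: "x \<in> carrier C.G" and k: "Phi x = \<one>\<^bsub>Aut\<^esub>" for x
  proof -
    obtain u where u: "u \<in> carrier G" "x = psi u \<or> x = psi u \<otimes>\<^bsub>C.G\<^esub> s0" using coset_cover[OF x] by blast
    have "x \<noteq> psi u \<otimes>\<^bsub>C.G\<^esub> s0"
    proof
      assume "x = psi u \<otimes>\<^bsub>C.G\<^esub> s0"
      then have "conj_aut G u \<otimes>\<^bsub>Aut\<^esub> inversion = \<one>\<^bsub>Aut\<^esub>"
        using k Phi_psi[OF u(1)] s0_carrier u(1) Phi_cgen[OF n0] refl_aut_root by simp
      then show False using conj_aut_inversion_ne_one[OF u(1) L_ge_2] exponent_odd by blast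
    qed
    then have "conj_aut G u = \<one>\<^bsub>Aut\<^esub>" "x = psi u" using k Phi_psi[OF u(1)] u(2) by simp_all
    then show ?thesis using conj_aut_trivial[OF u(1) L_ge_2] by simp
  qed
  then show ?thesis by (auto simp: kernel_def)
qed

lemma coxeter_group_embeds:
  "\<exists>\<phi>. \<phi> \<in> hom (coxeter_group n m) (AutoGroup (free_product_cyclic ms)) \<and> inj_on \<phi> (carrier (coxeter_group n m))"
  using Phi_hom Phi.trivial_ker_imp_inj[OF Phi_kernel] unfolding free_product_cyclic_eq coxeter_group_def by blast

end

theorem corollary2p10:
  fixes W :: "('g, 'b) monoid_scheme" and n :: nat and m :: "nat \<Rightarrow> nat \<Rightarrow> enat"
    and ms :: "nat list"
  assumes "group W"
    and "coxeter_matrix n m"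
    and "W \<cong> coxeter_group n m"
    and "odd_coxeter n m"
    and "cox_connected n m"
    and "cox_tree n m"
    and "n \<ge> 3"
    and "mset ms = finite_exponents n m"
  shows "\<exists>\<phi>. \<phi> \<in> hom W (AutoGroup (free_product_cyclic ms)) \<and> inj_on \<phi> (carrier W)"
proof -
  obtain parent label child depth where "coxeter_tree ms n m parent label child depth"
    using coxeter_tree_exists[OF assms(2,4,6,7,8)] by blast
  then show ?thesis
    using coxeter_tree.coxeter_group_embeds iso_embedding_transfer[OF assms(3)] by blast
qed

end
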